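(* Under the empirical-coordination polar coding scheme described in the context, for every $\epsilon>0$, $$\mathbb{P}\Big[\mathbb{V}\big(q_{XY},T_{X_{1:k}^{1:N}\widetilde Y_{1:k}^{1:N}}\big)>\epsilon\Big]\le k\Big(\sqrt{2\log2}\sqrt{N\delta_N}+2|\mathcal{X}||\mathcal{Y}|e^{-N\epsilon^2/(2|\mathcal{X}|^2|\mathcal{Y}|^2)}\Big)=O\big(k\sqrt{N\delta_N}\big),$$ where $T_{X_{1:k}^{1:N}\widetilde Y_{1:k}^{1:N}}$ is the joint histogram of the concatenated length-$kN$ sequences of all blocks.
   Context: All logarithms are base 2. $\mathbb{V}(p,q)=\sum_x|p(x)-q(x)|$. For sequences $(x^{1:m},y^{1:m})$, the joint histogram is $T(x,y)=\frac1m\sum_{l=1}^m\mathds{1}\{(x^l,y^l)=(x,y)\}$. For a vector $a^{1:N}$ and index set $\mathcal{A}$, $a^{1:N}[\mathcal{A}]$ is the subvector indexed by $\mathcal{A}$. Setting (empirical coordination scheme): Let $\mathcal{X},\mathcal{Y}$ be finite alphabets with $|\mathcal{Y}|$ prime, identified with $\mathbb{F}_{|\mathcal{Y}|}$, and $q_{XY}$ a target joint distribution. Let $N=2^n$, $G_n=\begin{bmatrix}1&0\\1&1\end{bmatrix}^{\otimes n}$ over $\mathbb{F}_{|\mathcal{Y}|}$, $(X^{1:N},Y^{1:N})$ i.i.d. $q_{XY}$, and $U^{1:N}=Y^{1:N}G_n$. Fix $\beta\in(0,1/2)$, $\delta_N=2^{-N^\beta}$, and $\mathcal{H}_Y=\{j: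 H(U^j|U^{1:j-1})>\delta_N\}$, $\mathcal{V}_{Y|X}=\{j: H(U^j|U^{1:j-1}X^{1:N})>\log|\mathcal{Y}|-\delta_N\}$. Node 1 observes, in each block $i\in\{1,\dots,k\}$, $X_i^{1:N}$ i.i.d. $q_X$ (independent across blocks). Common randomness $C_1$ uniform on $\mathcal{Y}^{|\mathcal{V}_{Y|X}|}$ is shared by both nodes. In block $i$, Node 1 sets $\widetilde U_i^{1:N}[\mathcal{V}_{Y|X}]=C_1$ and, for the remaining indices $j$ in increasing order, draws $\widetilde U_i^j$ according to $q_{U^j|U^{1:j-1}X^{1:N}}(\cdot|\widetilde U_i^{1:j-1},X_i^{1:N})$ if $j\in\mathcal{H}_Y\setminus\mathcal{V}_{Y|X}$ and according to $q_{U^j|U^{1:j-1}}(\cdot|\widetilde U_i^{1:j-1})$ if $j\notin\mathcal{H}_Y$. Node 1 sends $M_i=\widetilde U_i^{1:N}[\mathcal{H}_Y\setminus\mathcal{V}_{Y|X}]$ and the randomness $\widetilde C_i$ used for $\widetilde U_i^{1:N}[\mathcal{H}_Y^c]$; Node 2 reconstructs $\widetilde U_i^{1:N}$ and outputs $\widetilde Y_i^{1:N}=\widetilde U_i^{1:N}G_n$. *)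

theory Defs
  imports "HOL-Probability.Probability" "HOL-Library.Landau_Symbols"
begin

(* Alphabet Y = F_p is represented by {..<p} :: nat set (arithmetic mod p).
   Sequences of length N = 2^n are lists, indices 0..N-1 (paper: 1..N). *)

(* Entries of G_n = F^{\<otimes>n}, F = [[1,0],[1,1]], indices i,j < 2^n *)
fun kron_G :: "nat \<Rightarrow> nat \<Rightarrow> nat \<Rightarrow> nat" where
  "kron_G 0 i j = 1"
| "kron_G (Suc n) i j =
     (if i < 2^n then (if j < 2^n then kron_G n i j else 0)
      else (if j < 2^n then kron_G n (i - 2^n) j else kron_G n (i - 2^n) (j - 2^n)))"

definition polar :: "nat \<Rightarrow> nat \<Rightarrow> nat list \<Rightarrow> nat list" where
  "polar p n y = map (\<lambda>j. (\<Sum>i<2^n. y ! i * kron_G n i j) mod p) [0..<2^n]"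

definition polar_inv :: "nat \<Rightarrow> nat \<Rightarrow> nat list \<Rightarrow> nat list" where
  "polar_inv p n u = (THE y. length y = 2^n \<and> set y \<subseteq> {..<p} \<and> polar p n y = u)"

definition XU_pmf :: "nat \<Rightarrow> nat \<Rightarrow> ('x \<times> nat) pmf \<Rightarrow> ('x list \<times> nat list) pmf" where
  "XU_pmf p n q = map_pmf (\<lambda>xy. (map fst xy, polar p n (map snd xy))) (replicate_pmf (2^n) q)"

definition cond_entropy :: "('a \<times> 'b) pmf \<Rightarrow> real" where
  "cond_entropy J = measure_pmf.expectation J
      (\<lambda>(a,b). - log 2 (pmf J (a,b) / pmf (map_pmf snd J) b))"

definition condl :: "'a pmf \<Rightarrow> ('a \<times> 'b) pmf \<Rightarrow> 'b \<Rightarrow> 'a pmf" where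
  "condl d J b = (if b \<in> set_pmf (map_pmf snd J)
                   then map_pmf fst (cond_pmf J {ab. snd ab = b}) else d)"

definition delta :: "nat \<Rightarrow> real \<Rightarrow> real" where
  "delta N \<beta> = 2 powr (- (real N powr \<beta>))"

definition JU :: "nat \<Rightarrow> nat \<Rightarrow> ('x \<times> nat) pmf \<Rightarrow> nat \<Rightarrow> (nat \<times> nat list) pmf" where
  "JU p n q j = map_pmf (\<lambda>(x,u). (u ! j, take j u)) (XU_pmf p n q)"

definition JUX :: "nat \<Rightarrow> nat \<Rightarrow> ('x \<times> nat) pmf \<Rightarrow> nat \<Rightarrow> (nat \<times> (nat list \<times> 'x list)) pmf" where
  "JUX p n q j = map_pmf (\<lambda>(x,u). (u ! j, (take j u, x))) (XU_pmf p n q)"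

definition H_Y :: "nat \<Rightarrow> nat \<Rightarrow> ('x \<times> nat) pmf \<Rightarrow> real \<Rightarrow> nat set" where
  "H_Y p n q \<beta> = {j. j < 2^n \<and> cond_entropy (JU p n q j) > delta (2^n) \<beta>}"

definition V_YX :: "nat \<Rightarrow> nat \<Rightarrow> ('x \<times> nat) pmf \<Rightarrow> real \<Rightarrow> nat set" where
  "V_YX p n q \<beta> = {j. j < 2^n \<and> cond_entropy (JUX p n q j) > log 2 (real p) - delta (2^n) \<beta>}"

(* Node 1's encoder for one block: produces the first j symbols of \<tilde>U, given common
   randomness c (defined on V_YX) and the block's source sequence x *)
fun encode :: "nat \<Rightarrow> nat \<Rightarrow> ('x \<times> nat) pmf \<Rightarrow> real \<Rightarrow> (nat \<Rightarrow> nat) \<Rightarrow> 'x list \<Rightarrow> nat \<Rightarrow> nat list pmf" where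
  "encode p n q \<beta> c x 0 = return_pmf []"
| "encode p n q \<beta> c x (Suc j) = do {
      pre \<leftarrow> encode p n q \<beta> c x j;
      uj \<leftarrow> (if j \<in> V_YX p n q \<beta> then return_pmf (c j)
             else if j \<in> H_Y p n q \<beta> then condl (pmf_of_set {..<p}) (JUX p n q j) (pre, x)
             else condl (pmf_of_set {..<p}) (JU p n q j) pre);
      return_pmf (pre @ [uj]) }"

(* one block: X_i ~ q_X i.i.d., \<tilde>U_i from the encoder, Node 2 outputs \<tilde>Y_i = \<tilde>U_i G_n^{-1} *)
definition block :: "nat \<Rightarrow> nat \<Rightarrow> ('x \<times> nat) pmf \<Rightarrow> real \<Rightarrow> (nat \<Rightarrow> nat) \<Rightarrow> ('x list \<times> nat list) pmf" where
  "block p n q \<beta> c = do {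
      x \<leftarrow> replicate_pmf (2^n) (map_pmf fst q);
      u \<leftarrow> encode p n q \<beta> c x (2^n);
      return_pmf (x, polar_inv p n u) }"

definition scheme :: "nat \<Rightarrow> nat \<Rightarrow> ('x \<times> nat) pmf \<Rightarrow> real \<Rightarrow> nat \<Rightarrow> ('x list \<times> nat list) list pmf" where
  "scheme p n q \<beta> k = do {
      c \<leftarrow> pmf_of_set (PiE (V_YX p n q \<beta>) (\<lambda>_. {..<p}));
      replicate_pmf k (block p n q \<beta> c) }"

definition hist :: "'a list \<Rightarrow> 'b list \<Rightarrow> 'a \<times> 'b \<Rightarrow> real" where
  "hist xs ys ab = real (card {l. l < length xs \<and> (xs ! l, ys ! l) = ab}) / real (length xs)"

definition tv :: "nat \<Rightarrow> ('x::finite \<times> nat) pmf \<Rightarrow> ('x \<times> nat \<Rightarrow> real) \<Rightarrow> real" where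
  "tv p q T = (\<Sum>a\<in>(UNIV::'x set). \<Sum>b<p. \<bar>pmf q (a,b) - T (a,b)\<bar>)"

definition bound_rhs :: "nat \<Rightarrow> nat \<Rightarrow> nat \<Rightarrow> real \<Rightarrow> nat \<Rightarrow> real \<Rightarrow> real" where
  "bound_rhs cx p n \<beta> k \<epsilon> = real k * (sqrt (2 * ln 2) * sqrt (2^n * delta (2^n) \<beta>)
      + 2 * real cx * real p * exp (- (2^n * \<epsilon>\<^sup>2) / (2 * (real cx)\<^sup>2 * (real p)\<^sup>2)))"

end

theory Submission
  imports Defs
begin

text \<open>
  Average the common randomness out of one block: the resulting law \<open>M\<close> of \<open>(X, \<tilde>U)\<close> agrees with
  the ideal law \<open>Q\<close> of \<open>(X, U)\<close> except at the indices in \<open>\<V>\<^sub>Y\<^sub>|\<^sub>X\<close> (drawn uniformly instead of from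
  \<open>q(u\<^sup>j | u\<^sup>1\<^sup>:\<^sup>j\<^sup>-\<^sup>1, x)\<close>) and outside \<open>\<H>\<^sub>Y\<close> (drawn without looking at \<open>x\<close>).  The chain rule
  splits \<open>D(Q\<parallel>M)\<close> into one term per index, and by the choice of \<open>\<V>\<^sub>Y\<^sub>|\<^sub>X\<close> and \<open>\<H>\<^sub>Y\<close> each term is at
  most \<open>\<delta>\<^sub>N\<close> bits, so \<open>D(Q\<parallel>M) \<le> N \<delta>\<^sub>N ln 2\<close>.  A Pinsker-type inequality transfers any event from
  \<open>Q\<close> to \<open>M\<close> at cost \<open>\<surd>D\<close>, and under \<open>Q\<close> the block is i.i.d., so Hoeffding bounds the probability
  that its histogram is \<open>\<epsilon>\<close>-far from \<open>q\<^sub>X\<^sub>Y\<close>.  Finally the histogram of all \<open>k\<close> blocks is the average of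
  the block histograms, hence far from \<open>q\<^sub>X\<^sub>Y\<close> only if some block histogram is, and each block on its
  own has law \<open>M\<close>; a union bound over the blocks gives the factor \<open>k\<close>.
\<close>

subsection \<open>The polar transform is a bijection of \<open>\<F>\<^sub>p\<^sup>N\<close>\<close>

lemma kron_G_diag: "i < 2^n \<Longrightarrow> kron_G n i i = 1"
  by (induction n arbitrary: i) auto

lemma kron_G_upper: "i < j \<Longrightarrow> j < 2^n \<Longrightarrow> kron_G n i j = 0"
proof (induction n arbitrary: i j)
  case 0 then show ?case by simp
next
  case (Suc n)
  show ?case
  proof (cases "i < 2^n")
    case True
    then show ?thesis using Suc by auto
  next
    case False
    then have "\<not> j < 2^n" using Suc.prems by auto
    then show ?thesis using Suc False by auto
  qed
qed

definition words :: "nat \<Rightarrow> nat \<Rightarrow> nat list set" where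
  "words p N = {y. length y = N \<and> set y \<subseteq> {..<p}}"

lemma finite_words: "finite (words p N)"
proof -
  have "words p N = {xs. set xs \<subseteq> {..<p} \<and> length xs = N}" by (auto simp: words_def)
  then show ?thesis by (simp add: finite_lists_length_eq)
qed

lemma words_nth_less: "y \<in> words p N \<Longrightarrow> i < N \<Longrightarrow> y ! i < p"
  unfolding words_def using nth_mem by fastforce

lemma polar_nth: "j < 2^n \<Longrightarrow> polar p n y ! j = (\<Sum>i<2^n. y ! i * kron_G n i j) mod p"
  by (simp add: polar_def)

lemma polar_in_words: "0 < p \<Longrightarrow> polar p n y \<in> words p (2^n)"
  by (auto simp: words_def polar_def)

lemma polar_sum_split:
  assumes "m < 2^n"
  shows "(\<Sum>i<2^n. y ! i * kron_G n i m) = y ! m + (\<Sum>i<2^n. if m < i then y ! i * kron_G n i m else 0)"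
proof -
  have "(\<Sum>i<2^n. y ! i * kron_G n i m) =
        (\<Sum>i<2^n. (if i = m then y ! m else 0) + (if m < i then y ! i * kron_G n i m else 0))"
    using assms by (intro sum.cong) (auto simp: kron_G_diag kron_G_upper)
  also have "\<dots> = y ! m + (\<Sum>i<2^n. if m < i then y ! i * kron_G n i m else 0)"
    using assms by (simp add: sum.distrib)
  finally show ?thesis .
qed

text \<open>\<open>G\<^sub>n\<close> is lower unitriangular, so two preimages of the same word cannot differ at their last
  differing index \<open>m\<close>: entry \<open>m\<close> of the image only involves \<open>y\<^sub>m\<close> and the \<open>y\<^sub>i\<close> with \<open>i > m\<close>.\<close>
lemma inj_on_polar: "inj_on (polar p n) (words p (2^n))"
proof (rule inj_onI, rule ccontr)
  fix y y' assume y: "y \<in> words p (2^n)" and y': "y' \<in> words p (2^n)"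
    and eq: "polar p n y = polar p n y'" and ne: "y \<noteq> y'"
  define D where "D = {i. i < 2^n \<and> y ! i \<noteq> y' ! i}"
  have "D \<noteq> {}" using y y' ne by (auto simp: words_def D_def intro: nth_equalityI)
  moreover have fD: "finite D" by (simp add: D_def)
  ultimately have mD: "Max D \<in> D" by simp
  define m where "m = Max D"
  have m: "m < 2^n" "y ! m \<noteq> y' ! m" using mD by (auto simp: D_def m_def)
  have above: "y ! i = y' ! i" if "m < i" "i < 2^n" for i
  proof (rule ccontr)
    assume "y ! i \<noteq> y' ! i"
    then have "i \<in> D" using that by (simp add: D_def)
    then have "i \<le> m" using fD by (simp add: m_def)
    then show False using that by simp
  qed
  define T where "T = (\<Sum>i<2^n. if m < i then y ! i * kron_G n i m else 0)"
  have T': "T = (\<Sum>i<2^n. if m < i then y' ! i * kron_G n i m else 0)"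
    unfolding T_def by (intro sum.cong) (auto simp: above)
  have "(y ! m + T) mod p = (y' ! m + T) mod p"
    using arg_cong[OF eq, of "\<lambda>u. u ! m"] m(1)
    by (simp add: polar_nth polar_sum_split T_def T'[symmetric])
  then have "y ! m mod p = y' ! m mod p"
    by (simp add: nat_mod_eq_iff)
  moreover have "y ! m < p" "y' ! m < p" using words_nth_less[OF y m(1)] words_nth_less[OF y' m(1)] by auto
  ultimately show False using m(2) by simp
qed

lemma polar_image_words:
  assumes "0 < p" shows "polar p n ` words p (2^n) = words p (2^n)"
proof -
  have "polar p n ` words p (2^n) \<subseteq> words p (2^n)" using polar_in_words[OF assms] by auto
  moreover have "card (polar p n ` words p (2^n)) = card (words p (2^n))"
    using inj_on_polar by (rule card_image)
  ultimately show ?thesis using card_subset_eq[OF finite_words] by simp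
qed

lemma polar_inv_polar: "y \<in> words p (2^n) \<Longrightarrow> polar_inv p n (polar p n y) = y"
  unfolding polar_inv_def
  by (rule the_equality) (auto simp: words_def dest: inj_onD[OF inj_on_polar])

lemma polar_inv_in_words:
  assumes "0 < p" and "u \<in> words p (2^n)" shows "polar_inv p n u \<in> words p (2^n)"
proof -
  obtain y where "y \<in> words p (2^n)" "u = polar p n y"
    using assms polar_image_words by blast
  then show ?thesis by (simp add: polar_inv_polar)
qed

lemma map_pmf_map_replicate_pmf: "map_pmf (map f) (replicate_pmf m r) = replicate_pmf m (map_pmf f r)"
proof (induction m)
  case 0 then show ?case by simp
next
  case (Suc m)
  have "map_pmf (map f) (replicate_pmf (Suc m) r) =
        bind_pmf r (\<lambda>x. map_pmf (map f) (map_pmf ((#) x) (replicate_pmf m r)))"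
    by (simp add: map_bind_pmf map_pmf_def[symmetric])
  also have "\<dots> = bind_pmf r (\<lambda>x. map_pmf ((#) (f x)) (map_pmf (map f) (replicate_pmf m r)))"
    by (simp add: map_pmf_comp)
  also have "\<dots> = replicate_pmf (Suc m) (map_pmf f r)"
    by (simp add: Suc.IH bind_map_pmf map_pmf_def[symmetric])
  finally show ?case .
qed

lemma map_pmf_nth_replicate_pmf: "i < k \<Longrightarrow> map_pmf (\<lambda>bs. bs ! i) (replicate_pmf k r) = r"
proof (induction k arbitrary: i)
  case 0 then show ?case by simp
next
  case (Suc k)
  show ?case
  proof (cases i)
    case 0
    then show ?thesis by (simp add: map_bind_pmf map_pmf_comp bind_return_pmf')
  next
    case (Suc i')
    then show ?thesis using Suc.IH[of i'] Suc.prems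
      by (simp add: map_bind_pmf map_pmf_comp flip: map_pmf_def)
  qed
qed

lemma measure_pmf_eq_on_support:
  assumes "\<And>\<omega>. \<omega> \<in> set_pmf M \<Longrightarrow> \<omega> \<in> A \<longleftrightarrow> \<omega> \<in> B"
  shows "measure_pmf.prob M A = measure_pmf.prob M B"
proof -
  have "measure_pmf.prob M A = measure_pmf.prob M (A \<inter> set_pmf M)" by (simp add: measure_Int_set_pmf)
  also have "A \<inter> set_pmf M = B \<inter> set_pmf M" using assms by blast
  also have "measure_pmf.prob M (B \<inter> set_pmf M) = measure_pmf.prob M B" by (simp add: measure_Int_set_pmf)
  finally show ?thesis .
qed

lemma pmf_condl:
  assumes "b \<in> set_pmf (map_pmf snd J)"
  shows "pmf (condl d J b) a = pmf J (a, b) / pmf (map_pmf snd J) b"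
proof -
  let ?A = "{ab. snd ab = b}"
  have ne: "set_pmf J \<inter> ?A \<noteq> {}" using assms by auto
  have "pmf (condl d J b) a = measure_pmf.prob (cond_pmf J ?A) (fst -` {a})"
    using assms by (simp add: condl_def pmf_map)
  also have "\<dots> = measure_pmf.prob (cond_pmf J ?A) {(a, b)}"
    by (rule measure_pmf_eq_on_support) (use ne in \<open>auto simp: set_cond_pmf\<close>)
  also have "\<dots> = pmf J (a, b) / pmf (map_pmf snd J) b"
    using ne by (simp add: measure_pmf_single pmf_cond pmf_map vimage_def)
  finally show ?thesis .
qed

lemma set_pmf_condl_subset:
  fixes p :: nat
  assumes p: "0 < p" and J: "set_pmf J \<subseteq> {..<p} \<times> UNIV"
  shows "set_pmf (condl (pmf_of_set {..<p}) J b) \<subseteq> {..<p}"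
proof (cases "b \<in> set_pmf (map_pmf snd J)")
  case True
  then have "set_pmf J \<inter> {ab. snd ab = b} \<noteq> {}" by auto
  then have "set_pmf (condl (pmf_of_set {..<p}) J b) = fst ` (set_pmf J \<inter> {ab. snd ab = b})"
    using True by (simp add: condl_def set_cond_pmf)
  then show ?thesis using J by auto
next
  case False
  have "set_pmf (pmf_of_set {..<p}) = {..<p}" using p by (intro set_pmf_of_set) auto
  then show ?thesis using False by (simp add: condl_def)
qed

subsection \<open>Transferring events between close distributions\<close>

definition KL_div :: "'a pmf \<Rightarrow> 'a pmf \<Rightarrow> real" where
  "KL_div Q M = (\<Sum>\<omega>\<in>set_pmf Q. pmf Q \<omega> * ln (pmf Q \<omega> / pmf M \<omega>))"

definition bhattacharyya :: "'a pmf \<Rightarrow> 'a pmf \<Rightarrow> real" where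
  "bhattacharyya Q M = (\<Sum>\<omega>\<in>set_pmf Q. sqrt (pmf Q \<omega> * pmf M \<omega>))"

lemma two_point_fidelity_sq_le:
  fixes a b :: real
  assumes "0 \<le> a" "a \<le> 1" "0 \<le> b" "b \<le> 1"
  shows "(sqrt (a * b) + sqrt ((1 - a) * (1 - b)))\<^sup>2 \<le> 1 - (a - b)\<^sup>2"
proof -
  define X where "X = a * (1 - a)"
  define Y where "Y = b * (1 - b)"
  define s where "s = sqrt (a * b)"
  define t where "t = sqrt ((1 - a) * (1 - b))"
  have X: "0 \<le> X" and Y: "0 \<le> Y" using assms by (simp_all add: X_def Y_def)
  have s2: "s\<^sup>2 = a * b" using assms by (simp add: s_def)
  have t2: "t\<^sup>2 = (1 - a) * (1 - b)" using assms by (simp add: t_def)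
  have "a * b * ((1 - a) * (1 - b)) = X * Y" unfolding X_def Y_def by algebra
  then have st: "s * t = sqrt (X * Y)" unfolding s_def t_def real_sqrt_mult[symmetric] by simp
  have am: "2 * sqrt (X * Y) \<le> X + Y" using arith_geo_mean_sqrt[OF X Y] by simp
  have "(s + t)\<^sup>2 = s\<^sup>2 + t\<^sup>2 + 2 * (s * t)" by (simp add: power2_sum mult.assoc)
  also have "\<dots> \<le> a * b + (1 - a) * (1 - b) + (X + Y)" unfolding s2 t2 st using am by (rule add_left_mono)
  also have "\<dots> = 1 - (a - b)\<^sup>2" unfolding X_def Y_def power2_eq_square by algebra
  finally show ?thesis by (simp add: s_def t_def)
qed

lemma sum_sqrt_mult_le:
  fixes f g :: "'a \<Rightarrow> real"
  assumes f: "\<And>i. i \<in> I \<Longrightarrow> 0 \<le> f i" and g: "\<And>i. i \<in> I \<Longrightarrow> 0 \<le> g i"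
  shows "(\<Sum>i\<in>I. sqrt (f i * g i)) \<le> sqrt (\<Sum>i\<in>I. f i) * sqrt (\<Sum>i\<in>I. g i)"
proof -
  have "(\<Sum>i\<in>I. sqrt (f i) * sqrt (g i))\<^sup>2 \<le> (\<Sum>i\<in>I. (sqrt (f i))\<^sup>2) * (\<Sum>i\<in>I. (sqrt (g i))\<^sup>2)"
    by (rule Cauchy_Schwarz_ineq_sum)
  also have "(\<Sum>i\<in>I. (sqrt (f i))\<^sup>2) = (\<Sum>i\<in>I. f i)"
    by (rule sum.cong) (simp_all add: f)
  also have "(\<Sum>i\<in>I. (sqrt (g i))\<^sup>2) = (\<Sum>i\<in>I. g i)"
    by (rule sum.cong) (simp_all add: g)
  also have "(\<Sum>i\<in>I. sqrt (f i) * sqrt (g i)) = (\<Sum>i\<in>I. sqrt (f i * g i))"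
    by (simp add: real_sqrt_mult)
  finally have "(\<Sum>i\<in>I. sqrt (f i * g i)) \<le> sqrt ((\<Sum>i\<in>I. f i) * (\<Sum>i\<in>I. g i))"
    by (rule real_le_rsqrt)
  then show ?thesis by (simp add: real_sqrt_mult)
qed

lemma mult_sqrt_divide:
  fixes x y :: real
  assumes "0 < x"
  shows "x * sqrt (y / x) = sqrt (x * y)"
proof -
  have "x * sqrt (y / x) = sqrt x * (sqrt x * sqrt (y / x))"
    using assms by (simp add: mult.assoc[symmetric])
  also have "sqrt x * sqrt (y / x) = sqrt y"
    using assms by (simp add: real_sqrt_mult[symmetric])
  finally show ?thesis by (simp add: real_sqrt_mult)
qed

context
  fixes Q M :: "'a pmf"
  assumes fin: "finite (set_pmf Q)" and pos: "\<And>\<omega>. \<omega> \<in> set_pmf Q \<Longrightarrow> 0 < pmf M \<omega>"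
begin

lemma bhattacharyya_pos: "0 < bhattacharyya Q M"
proof -
  obtain \<omega> where w: "\<omega> \<in> set_pmf Q" using set_pmf_not_empty[of Q] by blast
  have "0 < sqrt (pmf Q \<omega> * pmf M \<omega>)" using w pos[OF w] by (simp add: pmf_positive)
  also have "\<dots> \<le> bhattacharyya Q M" unfolding bhattacharyya_def
    by (rule member_le_sum[OF w _ fin]) simp
  finally show ?thesis .
qed

text \<open>Jensen's inequality for \<open>ln\<close>, applied to the likelihood ratio \<open>\<surd>(M/Q)\<close> under \<open>Q\<close>.\<close>
lemma neg_half_KL_div_le_ln_bhattacharyya: "- KL_div Q M / 2 \<le> ln (bhattacharyya Q M)"
proof -
  let ?S = "set_pmf Q"
  define BC where "BC = bhattacharyya Q M"
  have BCpos: "0 < BC" unfolding BC_def by (rule bhattacharyya_pos)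
  have Qpos: "0 < pmf Q \<omega>" if "\<omega> \<in> ?S" for \<omega> using that by (simp add: pmf_positive)
  have sumQ: "(\<Sum>\<omega>\<in>?S. pmf Q \<omega>) = 1" by (rule sum_pmf_eq_1[OF fin]) simp
  have "(\<Sum>\<omega>\<in>?S. pmf Q \<omega> * ln (sqrt (pmf M \<omega> / pmf Q \<omega>) / BC)) \<le>
        (\<Sum>\<omega>\<in>?S. pmf Q \<omega> * (sqrt (pmf M \<omega> / pmf Q \<omega>) / BC - 1))"
  proof (rule sum_mono)
    fix \<omega> assume w: "\<omega> \<in> ?S"
    have "0 < sqrt (pmf M \<omega> / pmf Q \<omega>) / BC" using Qpos[OF w] pos[OF w] BCpos by simp
    then show "pmf Q \<omega> * ln (sqrt (pmf M \<omega> / pmf Q \<omega>) / BC) \<le> pmf Q \<omega> * (sqrt (pmf M \<omega> / pmf Q \<omega>) / BC - 1)"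
      using Qpos[OF w] by (simp add: mult_left_mono ln_le_minus_one)
  qed
  also have "\<dots> = (\<Sum>\<omega>\<in>?S. sqrt (pmf Q \<omega> * pmf M \<omega>) / BC - pmf Q \<omega>)"
    by (intro sum.cong refl) (simp add: right_diff_distrib mult_sqrt_divide Qpos)
  also have "\<dots> = 0"
    using BCpos by (simp add: sum_subtractf sum_divide_distrib[symmetric] BC_def bhattacharyya_def sumQ)
  finally have le0: "(\<Sum>\<omega>\<in>?S. pmf Q \<omega> * ln (sqrt (pmf M \<omega> / pmf Q \<omega>) / BC)) \<le> 0" .
  have "(\<Sum>\<omega>\<in>?S. pmf Q \<omega> * ln (sqrt (pmf M \<omega> / pmf Q \<omega>) / BC)) =
        (\<Sum>\<omega>\<in>?S. - (pmf Q \<omega> * ln (pmf Q \<omega> / pmf M \<omega>)) / 2 - pmf Q \<omega> * ln BC)"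
  proof (intro sum.cong refl)
    fix \<omega> assume w: "\<omega> \<in> ?S"
    have q: "0 < pmf Q \<omega>" and m: "0 < pmf M \<omega>" using Qpos[OF w] pos[OF w] by auto
    have "ln (sqrt (pmf M \<omega> / pmf Q \<omega>) / BC) = (ln (pmf M \<omega>) - ln (pmf Q \<omega>)) / 2 - ln BC"
      using q m BCpos by (simp add: ln_div ln_sqrt)
    moreover have "ln (pmf Q \<omega> / pmf M \<omega>) = ln (pmf Q \<omega>) - ln (pmf M \<omega>)"
      using q m by (simp add: ln_div)
    ultimately show "pmf Q \<omega> * ln (sqrt (pmf M \<omega> / pmf Q \<omega>) / BC) =
        - (pmf Q \<omega> * ln (pmf Q \<omega> / pmf M \<omega>)) / 2 - pmf Q \<omega> * ln BC"
      by (simp add: right_diff_distrib diff_divide_distrib)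
  qed
  also have "\<dots> = - KL_div Q M / 2 - ln BC"
    by (simp add: sum_subtractf sum_divide_distrib[symmetric] sum_negf KL_div_def
        sum_distrib_right[symmetric] sumQ)
  finally show ?thesis using le0 by (simp add: BC_def)
qed

lemma bhattacharyya_le_event:
  fixes B :: "'a set"
  defines "a \<equiv> measure_pmf.prob Q B" and "b \<equiv> measure_pmf.prob M B"
  shows "bhattacharyya Q M \<le> sqrt (a * b) + sqrt ((1 - a) * (1 - b))"
proof -
  let ?S = "set_pmf Q"
  have fS: "finite (?S \<inter> B)" "finite (?S - B)" using fin by auto
  have sQB: "(\<Sum>\<omega>\<in>?S \<inter> B. pmf Q \<omega>) = a"
    unfolding measure_measure_pmf_finite[OF fS(1), symmetric] a_def
    by (metis Int_commute measure_Int_set_pmf)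
  have sQnB: "(\<Sum>\<omega>\<in>?S - B. pmf Q \<omega>) = 1 - a"
  proof -
    have "(\<Sum>\<omega>\<in>?S. pmf Q \<omega>) = (\<Sum>\<omega>\<in>?S \<inter> B. pmf Q \<omega>) + (\<Sum>\<omega>\<in>?S - B. pmf Q \<omega>)"
      using fin by (metis sum.Int_Diff)
    then show ?thesis using sum_pmf_eq_1[OF fin, of Q] sQB by simp
  qed
  have sMB: "(\<Sum>\<omega>\<in>?S \<inter> B. pmf M \<omega>) \<le> b"
    unfolding measure_measure_pmf_finite[OF fS(1), symmetric] b_def
    by (rule measure_pmf.finite_measure_mono) auto
  have sMnB: "(\<Sum>\<omega>\<in>?S - B. pmf M \<omega>) \<le> 1 - b"
  proof -
    have "(\<Sum>\<omega>\<in>?S - B. pmf M \<omega>) \<le> measure_pmf.prob M (UNIV - B)"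
      unfolding measure_measure_pmf_finite[OF fS(2), symmetric]
      by (rule measure_pmf.finite_measure_mono) auto
    also have "\<dots> = 1 - b" unfolding b_def using measure_pmf.prob_compl[of B M] by simp
    finally show ?thesis .
  qed
  have ab: "0 \<le> a" "a \<le> 1" "0 \<le> b" "b \<le> 1" unfolding a_def b_def by auto
  have "bhattacharyya Q M = (\<Sum>\<omega>\<in>?S \<inter> B. sqrt (pmf Q \<omega> * pmf M \<omega>)) + (\<Sum>\<omega>\<in>?S - B. sqrt (pmf Q \<omega> * pmf M \<omega>))"
    unfolding bhattacharyya_def using fin by (metis sum.Int_Diff)
  also have "\<dots> \<le> sqrt (\<Sum>\<omega>\<in>?S \<inter> B. pmf Q \<omega>) * sqrt (\<Sum>\<omega>\<in>?S \<inter> B. pmf M \<omega>) +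
                 sqrt (\<Sum>\<omega>\<in>?S - B. pmf Q \<omega>) * sqrt (\<Sum>\<omega>\<in>?S - B. pmf M \<omega>)"
    by (intro add_mono sum_sqrt_mult_le) auto
  also have "\<dots> \<le> sqrt a * sqrt b + sqrt (1 - a) * sqrt (1 - b)"
    unfolding sQB sQnB using ab by (intro add_mono mult_left_mono real_sqrt_le_mono sMB sMnB) auto
  also have "\<dots> = sqrt (a * b) + sqrt ((1 - a) * (1 - b))" by (simp add: real_sqrt_mult)
  finally show ?thesis .
qed

text \<open>A Pinsker-type inequality: \<open>(b - a)\<^sup>2 \<le> 1 - BC\<^sup>2 \<le> 1 - exp (-D) \<le> D\<close>.\<close>
lemma measure_le_measure_add_sqrt_KL_div:
  "measure_pmf.prob M B \<le> measure_pmf.prob Q B + sqrt (KL_div Q M)"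
proof -
  define a where "a = measure_pmf.prob Q B"
  define b where "b = measure_pmf.prob M B"
  define BC where "BC = bhattacharyya Q M"
  have BCpos: "0 < BC" unfolding BC_def by (rule bhattacharyya_pos)
  have "exp (- KL_div Q M / 2) \<le> BC"
    using neg_half_KL_div_le_ln_bhattacharyya BCpos unfolding BC_def by (metis exp_le_cancel_iff exp_ln)
  then have "(exp (- KL_div Q M / 2))\<^sup>2 \<le> BC\<^sup>2" by (rule power_mono) simp
  then have lower: "exp (- KL_div Q M) \<le> BC\<^sup>2" by (simp add: power2_eq_square flip: exp_add)
  have ab: "0 \<le> a" "a \<le> 1" "0 \<le> b" "b \<le> 1" unfolding a_def b_def by auto
  have "BC\<^sup>2 \<le> (sqrt (a * b) + sqrt ((1 - a) * (1 - b)))\<^sup>2"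
    using bhattacharyya_le_event[of B] BCpos unfolding a_def b_def BC_def by (intro power_mono) auto
  also have "\<dots> \<le> 1 - (a - b)\<^sup>2" by (rule two_point_fidelity_sq_le[OF ab])
  finally have "(b - a)\<^sup>2 \<le> 1 - exp (- KL_div Q M)" using lower by (simp add: power2_commute)
  also have "\<dots> \<le> KL_div Q M" using exp_ge_add_one_self[of "- KL_div Q M"] by simp
  finally have "b - a \<le> sqrt (KL_div Q M)" by (rule real_le_rsqrt)
  then show ?thesis unfolding a_def b_def by simp
qed

end

subsection \<open>Histograms\<close>

lemma count_list_conv_length_filter: "count_list xs a = length (filter (\<lambda>z. z = a) xs)"
  by (induction xs) auto

lemma hist_conv_count_list:
  assumes "length xs = length ys"
  shows "hist xs ys ab = real (count_list (zip xs ys) ab) / real (length xs)"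
proof -
  have "{l. l < length xs \<and> (xs ! l, ys ! l) = ab} = {l. l < length (zip xs ys) \<and> zip xs ys ! l = ab}"
    using assms by auto
  then show ?thesis by (simp add: hist_def count_list_conv_length_filter length_filter_conv_card)
qed

lemma hist_map_fst_snd: "hist (map fst xy) (map snd xy) ab = real (count_list xy ab) / real (length xy)"
  by (simp add: hist_conv_count_list zip_map_fst_snd)

lemma tv_gt_imp_entry_far:
  fixes q :: "('x::finite \<times> nat) pmf" and T :: "'x \<times> nat \<Rightarrow> real"
  assumes p: "0 < p" and gt: "tv p q T > real CARD('x) * real p * t"
  shows "\<exists>a b. b < p \<and> t \<le> \<bar>pmf q (a, b) - T (a, b)\<bar>"
proof (rule ccontr)
  assume "\<not> ?thesis"
  then have "tv p q T < (\<Sum>a\<in>(UNIV::'x set). \<Sum>b<p. t)"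
    unfolding tv_def by (intro sum_strict_mono) (use p in \<open>auto simp: not_le\<close>)
  then show False using gt by simp
qed

lemma tv_average_le:
  fixes q :: "('x::finite \<times> nat) pmf"
  assumes k: "0 < k" and h: "\<And>i. i < k \<Longrightarrow> tv p q (h i) \<le> \<epsilon>"
  shows "tv p q (\<lambda>ab. (\<Sum>i<k. h i ab) / real k) \<le> \<epsilon>"
proof -
  let ?F = "\<lambda>i a b. \<bar>pmf q (a, b) - h i (a, b)\<bar>"
  have "tv p q (\<lambda>ab. (\<Sum>i<k. h i ab) / real k) \<le>
        (\<Sum>a\<in>(UNIV::'x set). \<Sum>b<p. (\<Sum>i<k. ?F i a b) / real k)"
    unfolding tv_def
  proof (intro sum_mono)
    fix a b
    have "pmf q (a, b) - (\<Sum>i<k. h i (a, b)) / real k = (\<Sum>i<k. pmf q (a, b) - h i (a, b)) / real k"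
      using k by (simp add: sum_subtractf diff_divide_distrib)
    then have "\<bar>pmf q (a, b) - (\<Sum>i<k. h i (a, b)) / real k\<bar> = \<bar>\<Sum>i<k. pmf q (a, b) - h i (a, b)\<bar> / real k"
      by simp
    also have "\<dots> \<le> (\<Sum>i<k. ?F i a b) / real k"
      by (intro divide_right_mono sum_abs) simp
    finally show "\<bar>pmf q (a, b) - (\<Sum>i<k. h i (a, b)) / real k\<bar> \<le> (\<Sum>i<k. ?F i a b) / real k" .
  qed
  also have "\<dots> = (\<Sum>a\<in>(UNIV::'x set). \<Sum>b<p. \<Sum>i<k. ?F i a b) / real k"
    by (simp only: sum_divide_distrib)
  also have "(\<Sum>a\<in>(UNIV::'x set). \<Sum>b<p. \<Sum>i<k. ?F i a b) = (\<Sum>a\<in>(UNIV::'x set). \<Sum>i<k. \<Sum>b<p. ?F i a b)"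
    by (rule sum.cong[OF refl], rule sum.swap)
  also have "\<dots> = (\<Sum>i<k. tv p q (h i))"
    unfolding tv_def by (rule sum.swap)
  also have "(\<Sum>i<k. tv p q (h i)) / real k \<le> (\<Sum>i<k. \<epsilon>) / real k"
    by (intro divide_right_mono sum_mono h) simp_all
  also have "\<dots> = \<epsilon>" using k by simp
  finally show ?thesis .
qed

lemma count_list_zip_concat:
  assumes "\<forall>b\<in>set bs. length (fst b) = length (snd b)"
  shows "count_list (zip (concat (map fst bs)) (concat (map snd bs))) ab =
    (\<Sum>b\<leftarrow>bs. count_list (zip (fst b) (snd b)) ab)"
  using assms by (induction bs) (simp_all add: zip_append)

lemma hist_concat_eq_average:
  fixes bs :: "('a list \<times> 'b list) list"
  assumes len: "\<forall>b\<in>set bs. length (fst b) = N \<and> length (snd b) = N" and N: "0 < N"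
  shows "hist (concat (map fst bs)) (concat (map snd bs)) =
    (\<lambda>ab. (\<Sum>i<length bs. hist (fst (bs ! i)) (snd (bs ! i)) ab) / real (length bs))"
proof
  fix ab :: "'a \<times> 'b"
  let ?c = "\<lambda>b. count_list (zip (fst b) (snd b)) ab"
  have lens: "length (concat (map fst bs)) = length bs * N" "length (concat (map snd bs)) = length bs * N"
    using len by (induction bs) auto
  have block: "hist (fst (bs ! i)) (snd (bs ! i)) ab = real (?c (bs ! i)) / real N" if "i < length bs" for i
    using len nth_mem[OF that] by (simp add: hist_conv_count_list)
  have "hist (concat (map fst bs)) (concat (map snd bs)) ab = real (\<Sum>b\<leftarrow>bs. ?c b) / real (length bs * N)"
    using len lens by (simp add: hist_conv_count_list count_list_zip_concat)
  also have "(\<Sum>b\<leftarrow>bs. ?c b) = (\<Sum>i<length bs. ?c (bs ! i))"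
    by (simp add: sum_list_sum_nth atLeast0LessThan)
  also have "real \<dots> / real (length bs * N) = (\<Sum>i<length bs. real (?c (bs ! i)) / real N) / real (length bs)"
    using N by (simp add: sum_divide_distrib[symmetric] field_simps)
  finally show "hist (concat (map fst bs)) (concat (map snd bs)) ab =
      (\<Sum>i<length bs. hist (fst (bs ! i)) (snd (bs ! i)) ab) / real (length bs)"
    by (simp add: block)
qed

lemma tv_hist_concat_gt_imp_block:
  fixes q :: "('x::finite \<times> nat) pmf"
  assumes len: "\<forall>b\<in>set bs. length (fst b) = N \<and> length (snd b) = N" and N: "0 < N" and bs: "bs \<noteq> []"
    and gt: "tv p q (hist (concat (map fst bs)) (concat (map snd bs))) > \<epsilon>"
  shows "\<exists>i<length bs. tv p q (hist (fst (bs ! i)) (snd (bs ! i))) > \<epsilon>"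
proof (rule ccontr)
  assume "\<not> ?thesis"
  then have "tv p q (hist (concat (map fst bs)) (concat (map snd bs))) \<le> \<epsilon>"
    unfolding hist_concat_eq_average[OF len N] using bs by (intro tv_average_le) auto
  then show False using gt by simp
qed

subsection \<open>Hoeffding's bound for the histogram of an i.i.d. sequence\<close>

lemma map_pmf_eq_bernoulli_pmf: "map_pmf (\<lambda>z. z = ab) q = bernoulli_pmf (pmf q ab)"
proof (rule pmf_eqI)
  fix b :: bool
  have "(\<lambda>z. z = ab) -` {True} = {ab}" "(\<lambda>z. z = ab) -` {False} = UNIV - {ab}" by auto
  then show "pmf (map_pmf (\<lambda>z. z = ab) q) b = pmf (bernoulli_pmf (pmf q ab)) b"
    using measure_pmf.prob_compl[of "{ab}" q]
    by (cases b) (simp_all add: pmf_map measure_pmf_single pmf_le_1)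
qed

lemma map_pmf_count_list_replicate_pmf:
  "map_pmf (\<lambda>xy. count_list xy ab) (replicate_pmf N q) = binomial_pmf N (pmf q ab)"
proof -
  have count: "count_list xy ab = (length \<circ> filter id) (map (\<lambda>z. z = ab) xy)" for xy :: "'a list"
    by (induction xy) auto
  have "map_pmf (\<lambda>xy. count_list xy ab) (replicate_pmf N q) =
        map_pmf (length \<circ> filter id) (map_pmf (map (\<lambda>z. z = ab)) (replicate_pmf N q))"
    unfolding map_pmf_comp by (simp only: count)
  also have "\<dots> = binomial_pmf N (pmf q ab)"
    by (simp add: map_pmf_map_replicate_pmf map_pmf_eq_bernoulli_pmf binomial_pmf_altdef pmf_le_1)
  finally show ?thesis .
qed

lemma prob_count_list_deviation_le:
  assumes N: "0 < N" and t: "0 \<le> t"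
  shows "measure_pmf.prob (replicate_pmf N q)
     {xy. t \<le> \<bar>real (count_list xy ab) / real N - pmf q ab\<bar>} \<le> 2 * exp (- 2 * real N * t\<^sup>2)"
proof -
  interpret binomial_distribution N "pmf q ab" by unfold_locales (simp add: pmf_le_1)
  have "measure_pmf.prob (replicate_pmf N q) {xy. t \<le> \<bar>real (count_list xy ab) / real N - pmf q ab\<bar>} =
     measure_pmf.prob (map_pmf (\<lambda>xy. count_list xy ab) (replicate_pmf N q))
      {x. \<bar>real x / real N - pmf q ab\<bar> \<ge> t}"
    by (simp add: vimage_def)
  also have "\<dots> \<le> 2 * exp (- 2 * real N * t\<^sup>2)"
    unfolding map_pmf_count_list_replicate_pmf using prob_abs_ge'[OF N t] by simp
  finally show ?thesis .
qed

text \<open>If the histogram is \<open>\<epsilon>\<close>-far from \<open>q\<close> in total variation, one of its \<open>|\<X>| p\<close> entries is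
  \<open>\<epsilon> / (|\<X>| p)\<close>-far; Hoeffding bounds each of these events.\<close>
lemma prob_tv_hist_replicate_pmf_gt_le:
  fixes q :: "('x::finite \<times> nat) pmf"
  assumes p: "0 < p" and e: "0 < \<epsilon>" and N: "0 < N"
  shows "measure_pmf.prob (replicate_pmf N q) {xy. tv p q (hist (map fst xy) (map snd xy)) > \<epsilon>}
    \<le> 2 * real CARD('x) * real p * exp (- (real N * \<epsilon>\<^sup>2) / (2 * (real CARD('x))\<^sup>2 * (real p)\<^sup>2))"
proof -
  define c where "c = real CARD('x) * real p"
  have c: "0 < c" unfolding c_def using p by simp
  define t where "t = \<epsilon> / c"
  let ?R = "replicate_pmf N q"
  let ?I = "(UNIV :: 'x set) \<times> {..<p}"
  let ?A = "\<lambda>ab. {xy. t \<le> \<bar>real (count_list xy ab) / real N - pmf q ab\<bar>}"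
  let ?E = "{xy. tv p q (hist (map fst xy) (map snd xy)) > \<epsilon>}"
  have sub: "?E \<inter> set_pmf ?R \<subseteq> (\<Union>ab\<in>?I. ?A ab)"
  proof
    fix xy assume xy: "xy \<in> ?E \<inter> set_pmf ?R"
    then have "tv p q (hist (map fst xy) (map snd xy)) > real CARD('x) * real p * t"
      using c p by (simp add: t_def c_def)
    then obtain a b where "b < p" "t \<le> \<bar>pmf q (a, b) - hist (map fst xy) (map snd xy) (a, b)\<bar>"
      using tv_gt_imp_entry_far[OF p] by blast
    then show "xy \<in> (\<Union>ab\<in>?I. ?A ab)"
      using xy by (auto simp: hist_map_fst_snd set_replicate_pmf abs_minus_commute)
  qed
  have "measure_pmf.prob ?R ?E = measure_pmf.prob ?R (?E \<inter> set_pmf ?R)"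
    by (simp add: measure_Int_set_pmf)
  also have "\<dots> \<le> measure_pmf.prob ?R (\<Union>ab\<in>?I. ?A ab)"
    by (rule measure_pmf.finite_measure_mono[OF sub]) simp
  also have "\<dots> \<le> (\<Sum>ab\<in>?I. measure_pmf.prob ?R (?A ab))"
    by (rule measure_pmf.finite_measure_subadditive_finite) auto
  also have "\<dots> \<le> (\<Sum>ab\<in>?I. 2 * exp (- 2 * real N * t\<^sup>2))"
    by (intro sum_mono prob_count_list_deviation_le N) (use c e in \<open>simp add: t_def\<close>)
  also have "\<dots> = c * (2 * exp (- 2 * real N * t\<^sup>2))"
    by (simp add: c_def card_cartesian_product)
  also have "\<dots> \<le> c * (2 * exp (- (real N * \<epsilon>\<^sup>2) / (2 * c\<^sup>2)))"
  proof -
    define z where "z = real N * \<epsilon>\<^sup>2 / (2 * c\<^sup>2)"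
    have z: "0 \<le> z" unfolding z_def by simp
    have "- 2 * real N * t\<^sup>2 = - 4 * z"
      using c by (simp add: t_def z_def power_divide)
    also have "\<dots> \<le> - z" using z by simp
    also have "\<dots> = - (real N * \<epsilon>\<^sup>2) / (2 * c\<^sup>2)" by (simp add: z_def)
    finally show ?thesis using c by (intro mult_left_mono) simp_all
  qed
  finally show ?thesis by (simp add: c_def power_mult_distrib mult.assoc)
qed
subsection \<open>The law of one encoded block\<close>

definition encoder_kernel :: "nat \<Rightarrow> nat \<Rightarrow> ('x \<times> nat) pmf \<Rightarrow> real \<Rightarrow> (nat \<Rightarrow> nat) \<Rightarrow> 'x list \<Rightarrow> nat list \<Rightarrow> nat \<Rightarrow> nat pmf" where
  "encoder_kernel p n q \<beta> c x pre j = (if j \<in> V_YX p n q \<beta> then return_pmf (c j)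
             else if j \<in> H_Y p n q \<beta> then condl (pmf_of_set {..<p}) (JUX p n q j) (pre, x)
             else condl (pmf_of_set {..<p}) (JU p n q j) pre)"

text \<open>The encoder's kernel at the indices outside \<open>\<V>\<^sub>Y\<^sub>|\<^sub>X\<close>, where it does not use the common randomness.\<close>
definition free_kernel :: "nat \<Rightarrow> nat \<Rightarrow> ('x \<times> nat) pmf \<Rightarrow> real \<Rightarrow> 'x list \<Rightarrow> nat list \<Rightarrow> nat \<Rightarrow> nat pmf" where
  "free_kernel p n q \<beta> x pre j = (if j \<in> H_Y p n q \<beta> then condl (pmf_of_set {..<p}) (JUX p n q j) (pre, x)
             else condl (pmf_of_set {..<p}) (JU p n q j) pre)"

definition common_rand :: "nat \<Rightarrow> nat \<Rightarrow> ('x \<times> nat) pmf \<Rightarrow> real \<Rightarrow> (nat \<Rightarrow> nat) set" where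
  "common_rand p n q \<beta> = PiE (V_YX p n q \<beta>) (\<lambda>_. {..<p})"

definition encoder_pmf :: "nat \<Rightarrow> nat \<Rightarrow> ('x \<times> nat) pmf \<Rightarrow> real \<Rightarrow> ('x list \<times> nat list) pmf" where
  "encoder_pmf p n q \<beta> = do {
      c \<leftarrow> pmf_of_set (common_rand p n q \<beta>);
      x \<leftarrow> replicate_pmf (2^n) (map_pmf fst q);
      u \<leftarrow> encode p n q \<beta> c x (2^n);
      return_pmf (x, u) }"

lemma scheme_eq:
  "scheme p n q \<beta> k = bind_pmf (pmf_of_set (common_rand p n q \<beta>)) (\<lambda>c. replicate_pmf k (block p n q \<beta> c))"
  by (simp add: scheme_def common_rand_def)

lemma map_pmf_nth_scheme:
  "i < k \<Longrightarrow> map_pmf (\<lambda>bs. bs ! i) (scheme p n q \<beta> k) = bind_pmf (pmf_of_set (common_rand p n q \<beta>)) (block p n q \<beta>)"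
  unfolding scheme_eq map_bind_pmf by (simp add: map_pmf_nth_replicate_pmf)

lemma encoder_kernel_eq:
  "encoder_kernel p n q \<beta> c x pre j =
    (if j \<in> V_YX p n q \<beta> then return_pmf (c j) else free_kernel p n q \<beta> x pre j)"
  unfolding encoder_kernel_def free_kernel_def by (rule refl)

lemma encode_Suc_eq_bind: "encode p n q \<beta> c x (Suc j) =
   bind_pmf (encode p n q \<beta> c x j) (\<lambda>pre. map_pmf (\<lambda>a. pre @ [a]) (encoder_kernel p n q \<beta> c x pre j))"
  by (simp add: encoder_kernel_def map_pmf_def)

lemma pmf_map_snoc:
  "pmf (map_pmf (\<lambda>a. pre @ [a]) K) u = (if u \<noteq> [] \<and> pre = butlast u then pmf K (last u) else 0)"
proof (cases "u \<noteq> [] \<and> pre = butlast u")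
  case True
  then have "u = pre @ [last u]" by simp
  moreover have "pmf (map_pmf (\<lambda>a. pre @ [a]) K) (pre @ [last u]) = pmf K (last u)"
    by (rule pmf_map_inj') (simp add: inj_def)
  ultimately show ?thesis using True by metis
next
  case False
  then have "u \<notin> (\<lambda>a. pre @ [a]) ` set_pmf K" by auto
  then have "pmf (map_pmf (\<lambda>a. pre @ [a]) K) u = 0" by (rule pmf_map_outside)
  then show ?thesis using False by auto
qed

lemma pmf_encode:
  "pmf (encode p n q \<beta> c x m) u =
     (if length u = m then (\<Prod>j<m. pmf (encoder_kernel p n q \<beta> c x (take j u) j) (u ! j)) else 0)"
proof (induction m arbitrary: u)
  case 0
  then show ?case by (simp add: indicator_def)
next
  case (Suc m)
  let ?K = "\<lambda>pre. encoder_kernel p n q \<beta> c x pre m"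
  have "pmf (encode p n q \<beta> c x (Suc m)) u =
     (\<integral>pre. pmf (map_pmf (\<lambda>a. pre @ [a]) (?K pre)) u \<partial>measure_pmf (encode p n q \<beta> c x m))"
    unfolding encode_Suc_eq_bind pmf_bind by (rule refl)
  also have "\<dots> = (\<Sum>pre\<in>{butlast u}. pmf (map_pmf (\<lambda>a. pre @ [a]) (?K pre)) u * pmf (encode p n q \<beta> c x m) pre)"
    by (rule integral_measure_pmf_real) (auto simp: pmf_map_snoc split: if_splits)
  also have "\<dots> = (if length u = Suc m then (\<Prod>j<Suc m. pmf (encoder_kernel p n q \<beta> c x (take j u) j) (u ! j)) else 0)"
  proof (cases "length u = Suc m")
    case True
    then have ne: "u \<noteq> []" by auto
    have bl: "butlast u = take m u" using True by (simp add: butlast_conv_take)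
    have lst: "last u = u ! m" using True ne by (simp add: last_conv_nth)
    have "(\<Prod>j<m. pmf (encoder_kernel p n q \<beta> c x (take j (butlast u)) j) (butlast u ! j)) =
          (\<Prod>j<m. pmf (encoder_kernel p n q \<beta> c x (take j u) j) (u ! j))"
      using True by (intro prod.cong) (auto simp: bl)
    then show ?thesis using True ne Suc.IH[of "butlast u"]
      by (simp add: pmf_map_snoc bl[symmetric] lst[symmetric] mult.commute)
  next
    case False
    then show ?thesis using Suc.IH[of "butlast u"] by (auto simp: pmf_map_snoc)
  qed
  finally show ?case .
qed

lemma V_YX_subset: "V_YX p n q \<beta> \<subseteq> {..<2^n}"
  unfolding V_YX_def by blast

lemma finite_V_YX: "finite (V_YX p n q \<beta>)"
  using V_YX_subset by (rule finite_subset) simp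

lemma finite_common_rand: "finite (common_rand p n q \<beta>)"
  unfolding common_rand_def by (intro finite_PiE finite_V_YX) auto

lemma card_common_rand: "card (common_rand p n q \<beta>) = p ^ card (V_YX p n q \<beta>)"
  unfolding common_rand_def by (simp add: card_PiE finite_V_YX)

lemma common_rand_nonempty: "0 < p \<Longrightarrow> common_rand p n q \<beta> \<noteq> {}"
  unfolding common_rand_def by (auto simp: PiE_eq_empty_iff)

text \<open>Summing over the common randomness leaves exactly one \<open>c\<close>, namely \<open>u\<close> restricted to \<open>\<V>\<^sub>Y\<^sub>|\<^sub>X\<close>.\<close>
lemma sum_common_rand_pmf_encode:
  assumes "length u = 2^n" "\<forall>j\<in>V_YX p n q \<beta>. u ! j < p"
  shows "(\<Sum>c\<in>common_rand p n q \<beta>. pmf (encode p n q \<beta> c x (2^n)) u) =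
    (\<Prod>j\<in>{..<2^n} - V_YX p n q \<beta>. pmf (free_kernel p n q \<beta> x (take j u) j) (u ! j))"
proof -
  let ?V = "V_YX p n q \<beta>" and ?C = "common_rand p n q \<beta>"
  let ?R = "\<Prod>j\<in>{..<2^n} - ?V. pmf (free_kernel p n q \<beta> x (take j u) j) (u ! j)"
  define c0 where "c0 = restrict (\<lambda>j. u ! j) ?V"
  have c0: "c0 \<in> ?C" unfolding c0_def common_rand_def using assms(2) by simp
  have "pmf (encode p n q \<beta> c x (2^n)) u = (if c = c0 then ?R else 0)" if c: "c \<in> ?C" for c
  proof -
    have agree: "(\<forall>j\<in>?V. c j = u ! j) \<longleftrightarrow> c = c0"
      using c by (auto simp: c0_def common_rand_def PiE_def extensional_def fun_eq_iff)
    have "pmf (encode p n q \<beta> c x (2^n)) u = (\<Prod>j<2^n. pmf (encoder_kernel p n q \<beta> c x (take j u) j) (u ! j))"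
      using assms(1) by (simp add: pmf_encode)
    also have "\<dots> = (\<Prod>j\<in>?V. indicator {u ! j} (c j)) * ?R"
      by (subst prod.subset_diff[OF V_YX_subset finite_lessThan])
         (auto simp: encoder_kernel_eq mult.commute intro!: arg_cong2[where f="(*)"] prod.cong)
    also have "(\<Prod>j\<in>?V. indicator {u ! j} (c j) :: real) = (if \<forall>j\<in>?V. c j = u ! j then 1 else 0)"
      using finite_V_YX by (induction rule: finite_induct) auto
    finally show ?thesis by (simp add: agree)
  qed
  then have "(\<Sum>c\<in>?C. pmf (encode p n q \<beta> c x (2^n)) u) = (\<Sum>c\<in>?C. if c = c0 then ?R else 0)"
    by (intro sum.cong) auto
  also have "\<dots> = ?R" using c0 finite_common_rand[of p n q \<beta>] by simp
  finally show ?thesis .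
qed

lemma pmf_bind_map_Pair:
  "pmf (bind_pmf X (\<lambda>x'. map_pmf (Pair x') (E x'))) (x, u) = pmf X x * pmf (E x) u"
proof -
  have "pmf (bind_pmf X (\<lambda>x'. map_pmf (Pair x') (E x'))) (x, u)
     = (\<Sum>x'\<in>{x}. pmf (map_pmf (Pair x') (E x')) (x, u) * pmf X x')"
    unfolding pmf_bind
  proof (rule integral_measure_pmf_real)
    fix x' assume "pmf (map_pmf (Pair x') (E x')) (x, u) \<noteq> 0"
    moreover have "x' \<noteq> x \<Longrightarrow> pmf (map_pmf (Pair x') (E x')) (x, u) = 0"
      by (rule pmf_map_outside) auto
    ultimately show "x' \<in> {x}" by auto
  qed simp
  also have "\<dots> = pmf X x * pmf (E x) u"
    using pmf_map_inj'[of "Pair x" "E x" u] by (simp add: inj_on_def)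
  finally show ?thesis .
qed

lemma pmf_encoder_pmf:
  assumes p: "0 < p" and "length u = 2^n" "\<forall>j\<in>V_YX p n q \<beta>. u ! j < p"
  shows "pmf (encoder_pmf p n q \<beta>) (x, u) = pmf (replicate_pmf (2^n) (map_pmf fst q)) x *
    (\<Prod>j\<in>{..<2^n} - V_YX p n q \<beta>. pmf (free_kernel p n q \<beta> x (take j u) j) (u ! j))
      / real p ^ card (V_YX p n q \<beta>)"
proof -
  let ?X = "replicate_pmf (2^n) (map_pmf fst q)"
  have enc: "encoder_pmf p n q \<beta> =
      bind_pmf (pmf_of_set (common_rand p n q \<beta>)) (\<lambda>c. bind_pmf ?X (\<lambda>x'. map_pmf (Pair x') (encode p n q \<beta> c x' (2^n))))"
    by (simp add: encoder_pmf_def map_pmf_def)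
  have "pmf (encoder_pmf p n q \<beta>) (x, u) = (\<integral>c. pmf (bind_pmf ?X (\<lambda>x'. map_pmf (Pair x')
      (encode p n q \<beta> c x' (2^n)))) (x, u) \<partial>measure_pmf (pmf_of_set (common_rand p n q \<beta>)))"
    unfolding enc by (rule pmf_bind)
  also have "\<dots> = (\<Sum>c\<in>common_rand p n q \<beta>. pmf ?X x * pmf (encode p n q \<beta> c x (2^n)) u) / card (common_rand p n q \<beta>)"
    by (simp only: integral_pmf_of_set[OF common_rand_nonempty[OF p] finite_common_rand] pmf_bind_map_Pair)
  also have "\<dots> = pmf ?X x *
    (\<Prod>j\<in>{..<2^n} - V_YX p n q \<beta>. pmf (free_kernel p n q \<beta> x (take j u) j) (u ! j)) / real p ^ card (V_YX p n q \<beta>)"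
    unfolding sum_distrib_left[symmetric] sum_common_rand_pmf_encode[OF assms(2,3)] card_common_rand of_nat_power
    by (rule refl)
  finally show ?thesis .
qed

definition cyl_prob :: "nat \<Rightarrow> nat \<Rightarrow> ('x \<times> nat) pmf \<Rightarrow> nat \<Rightarrow> 'x list \<times> nat list \<Rightarrow> real" where
  "cyl_prob p n q j \<omega> =
    measure_pmf.prob (XU_pmf p n q) {\<omega>'. fst \<omega>' = fst \<omega> \<and> take j (snd \<omega>') = take j (snd \<omega>)}"

definition cyl_prob_u :: "nat \<Rightarrow> nat \<Rightarrow> ('x \<times> nat) pmf \<Rightarrow> nat \<Rightarrow> 'x list \<times> nat list \<Rightarrow> real" where
  "cyl_prob_u p n q j \<omega> = measure_pmf.prob (XU_pmf p n q) {\<omega>'. take j (snd \<omega>') = take j (snd \<omega>)}"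

lemma take_Suc_eq_take_Suc_iff:
  "j < length u \<Longrightarrow> j < length u' \<Longrightarrow>
    take (Suc j) u' = take (Suc j) u \<longleftrightarrow> u' ! j = u ! j \<and> take j u' = take j u"
  by (auto simp: take_Suc_conv_app_nth)

lemma cyl_prob_Suc_le: "cyl_prob p n q (Suc j) \<omega> \<le> cyl_prob p n q j \<omega>"
proof -
  have take_j: "take j u = take j v" if "take (Suc j) u = take (Suc j) v" for u v :: "nat list"
  proof -
    have "take j (take (Suc j) u) = take j (take (Suc j) v)" using that by simp
    then show ?thesis by simp
  qed
  show ?thesis
    unfolding cyl_prob_def by (rule measure_pmf.finite_measure_mono) (use take_j in blast, simp)
qed

lemma pmf_le_cyl_prob: "pmf (XU_pmf p n q) \<omega> \<le> cyl_prob p n q j \<omega>"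
  unfolding cyl_prob_def measure_pmf_single[symmetric]
  by (rule measure_pmf.finite_measure_mono) auto

lemma pmf_le_cyl_prob_u: "pmf (XU_pmf p n q) \<omega> \<le> cyl_prob_u p n q j \<omega>"
  unfolding cyl_prob_u_def measure_pmf_single[symmetric]
  by (rule measure_pmf.finite_measure_mono) auto

lemma pmf_map_snd_JUX: "pmf (map_pmf snd (JUX p n q j)) (take j (snd \<omega>), fst \<omega>) = cyl_prob p n q j \<omega>"
  unfolding JUX_def cyl_prob_def map_pmf_comp pmf_map
  by (intro arg_cong[where f="measure_pmf.prob _"]) auto

lemma pmf_map_snd_JU: "pmf (map_pmf snd (JU p n q j)) (take j (snd \<omega>)) = cyl_prob_u p n q j \<omega>"
  unfolding JU_def cyl_prob_u_def map_pmf_comp pmf_map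
  by (intro arg_cong[where f="measure_pmf.prob _"]) auto

context
  fixes p n :: nat and q :: "('x::finite \<times> nat) pmf" and \<beta> :: real
  assumes p: "0 < p" and q: "set_pmf q \<subseteq> UNIV \<times> {..<p}"
begin

lemma set_pmf_XU: "\<omega> \<in> set_pmf (XU_pmf p n q) \<Longrightarrow> length (fst \<omega>) = 2^n \<and> snd \<omega> \<in> words p (2^n)"
  unfolding XU_pmf_def using polar_in_words[OF p] by (auto simp: set_replicate_pmf)

lemma length_snd_XU: "\<omega> \<in> set_pmf (XU_pmf p n q) \<Longrightarrow> length (snd \<omega>) = 2^n"
  using set_pmf_XU by (simp add: words_def)

lemma finite_set_pmf_XU: "finite (set_pmf (XU_pmf p n q))"
proof -
  have "set_pmf (replicate_pmf (2^n) q) \<subseteq> {xs. set xs \<subseteq> set_pmf q \<and> length xs = 2^n}"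
    by (auto simp: set_replicate_pmf)
  moreover have "finite (set_pmf q)" using q by (rule finite_subset) simp
  ultimately have "finite (set_pmf (replicate_pmf (2^n) q))"
    using finite_lists_length_eq finite_subset by blast
  then show ?thesis unfolding XU_pmf_def by simp
qed

lemma map_pmf_fst_XU: "map_pmf fst (XU_pmf p n q) = replicate_pmf (2^n) (map_pmf fst q)"
  unfolding XU_pmf_def by (simp add: map_pmf_comp map_pmf_map_replicate_pmf[symmetric])

lemma pmf_JUX:
  assumes w: "\<omega> \<in> set_pmf (XU_pmf p n q)" and j: "j < 2^n"
  shows "pmf (JUX p n q j) (snd \<omega> ! j, (take j (snd \<omega>), fst \<omega>)) = cyl_prob p n q (Suc j) \<omega>"
  unfolding JUX_def cyl_prob_def pmf_map
proof (rule measure_pmf_eq_on_support)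
  fix \<omega>' assume "\<omega>' \<in> set_pmf (XU_pmf p n q)"
  then have "length (snd \<omega>') = 2^n" "length (snd \<omega>) = 2^n" using w by (simp_all add: length_snd_XU)
  then show "\<omega>' \<in> (\<lambda>(x, u). (u ! j, take j u, x)) -` {(snd \<omega> ! j, (take j (snd \<omega>), fst \<omega>))} \<longleftrightarrow> \<omega>' \<in> {\<omega>'. fst \<omega>' = fst \<omega> \<and> take (Suc j) (snd \<omega>') = take (Suc j) (snd \<omega>)}"
    using j by (auto simp: take_Suc_eq_take_Suc_iff case_prod_beta)
qed

lemma pmf_JU:
  assumes w: "\<omega> \<in> set_pmf (XU_pmf p n q)" and j: "j < 2^n"
  shows "pmf (JU p n q j) (snd \<omega> ! j, take j (snd \<omega>)) = cyl_prob_u p n q (Suc j) \<omega>"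
  unfolding JU_def cyl_prob_u_def pmf_map
proof (rule measure_pmf_eq_on_support)
  fix \<omega>' assume "\<omega>' \<in> set_pmf (XU_pmf p n q)"
  then have "length (snd \<omega>') = 2^n" "length (snd \<omega>) = 2^n" using w by (simp_all add: length_snd_XU)
  then show "\<omega>' \<in> (\<lambda>(x, u). (u ! j, take j u)) -` {(snd \<omega> ! j, take j (snd \<omega>))} \<longleftrightarrow> \<omega>' \<in> {\<omega>'. take (Suc j) (snd \<omega>') = take (Suc j) (snd \<omega>)}"
    using j by (auto simp: take_Suc_eq_take_Suc_iff case_prod_beta)
qed

lemma cyl_prob_0: "cyl_prob p n q 0 \<omega> = pmf (replicate_pmf (2^n) (map_pmf fst q)) (fst \<omega>)"
  unfolding cyl_prob_def map_pmf_fst_XU[symmetric] pmf_map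
  by (intro arg_cong[where f="measure_pmf.prob _"]) auto

lemma cyl_prob_full:
  assumes "\<omega> \<in> set_pmf (XU_pmf p n q)"
  shows "cyl_prob p n q (2^n) \<omega> = pmf (XU_pmf p n q) \<omega>"
  unfolding cyl_prob_def measure_pmf_single[symmetric]
  by (rule measure_pmf_eq_on_support) (use assms in \<open>auto simp: prod_eq_iff length_snd_XU\<close>)

lemma cyl_prob_pos:
  assumes "\<omega> \<in> set_pmf (XU_pmf p n q)" shows "0 < cyl_prob p n q j \<omega>"
  using pmf_positive[OF assms] pmf_le_cyl_prob[of p n q \<omega> j] by linarith

lemma cyl_prob_u_pos:
  assumes "\<omega> \<in> set_pmf (XU_pmf p n q)" shows "0 < cyl_prob_u p n q j \<omega>"
  using pmf_positive[OF assms] pmf_le_cyl_prob_u[of p n q \<omega> j] by linarith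

text \<open>On the support of \<open>Q\<close>, the encoder's kernel is the conditional law of \<open>U\<^sup>j\<close> under \<open>Q\<close>.\<close>
lemma free_kernel_eq_ratio:
  assumes w: "\<omega> \<in> set_pmf (XU_pmf p n q)" and j: "j < 2^n"
  shows "pmf (free_kernel p n q \<beta> (fst \<omega>) (take j (snd \<omega>)) j) (snd \<omega> ! j) =
    (if j \<in> H_Y p n q \<beta> then cyl_prob p n q (Suc j) \<omega> / cyl_prob p n q j \<omega>
     else cyl_prob_u p n q (Suc j) \<omega> / cyl_prob_u p n q j \<omega>)"
proof -
  have "(take j (snd \<omega>), fst \<omega>) \<in> set_pmf (map_pmf snd (JUX p n q j))"
    using cyl_prob_pos[OF w, of j] unfolding set_pmf_iff pmf_map_snd_JUX by simp
  moreover have "take j (snd \<omega>) \<in> set_pmf (map_pmf snd (JU p n q j))"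
    using cyl_prob_u_pos[OF w, of j] unfolding set_pmf_iff pmf_map_snd_JU by simp
  ultimately show ?thesis
    using w j by (simp add: free_kernel_def pmf_condl pmf_JUX pmf_JU pmf_map_snd_JUX pmf_map_snd_JU)
qed

end

subsection \<open>The divergence between the ideal and the encoded block\<close>

lemma cond_entropy_map_pmf:
  assumes fin: "finite (set_pmf Q)"
    and r: "\<And>\<omega>. \<omega> \<in> set_pmf Q \<Longrightarrow>
      pmf (map_pmf f Q) (f \<omega>) / pmf (map_pmf snd (map_pmf f Q)) (snd (f \<omega>)) = r \<omega>"
  shows "cond_entropy (map_pmf f Q) = - (\<Sum>\<omega>\<in>set_pmf Q. pmf Q \<omega> * log 2 (r \<omega>))"
proof -
  let ?J = "map_pmf f Q"
  have "cond_entropy ?J =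
      measure_pmf.expectation Q (\<lambda>\<omega>. - log 2 (pmf ?J (f \<omega>) / pmf (map_pmf snd ?J) (snd (f \<omega>))))"
    unfolding cond_entropy_def integral_map_pmf by (simp add: case_prod_beta)
  also have "\<dots> = (\<Sum>\<omega>\<in>set_pmf Q. - log 2 (r \<omega>) * pmf Q \<omega>)"
    by (subst integral_measure_pmf_real[OF fin]) (auto simp: r)
  finally show ?thesis by (simp add: sum_negf mult.commute)
qed

context
  fixes p n :: nat and q :: "('x::finite \<times> nat) pmf" and \<beta> :: real
  assumes p: "0 < p" and q: "set_pmf q \<subseteq> UNIV \<times> {..<p}"
begin

definition log_cyl_incr :: "nat \<Rightarrow> 'x list \<times> nat list \<Rightarrow> real" where
  "log_cyl_incr j \<omega> = ln (cyl_prob p n q (Suc j) \<omega>) - ln (cyl_prob p n q j \<omega>)"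

definition log_cyl_u_incr :: "nat \<Rightarrow> 'x list \<times> nat list \<Rightarrow> real" where
  "log_cyl_u_incr j \<omega> = ln (cyl_prob_u p n q (Suc j) \<omega>) - ln (cyl_prob_u p n q j \<omega>)"

definition kernel_prob :: "nat \<Rightarrow> 'x list \<times> nat list \<Rightarrow> real" where
  "kernel_prob j \<omega> = pmf (free_kernel p n q \<beta> (fst \<omega>) (take j (snd \<omega>)) j) (snd \<omega> ! j)"

text \<open>The contribution of index \<open>j\<close> to \<open>ln (Q \<omega> / M \<omega>)\<close>.\<close>
definition KL_term :: "nat \<Rightarrow> 'x list \<times> nat list \<Rightarrow> real" where
  "KL_term j \<omega> = log_cyl_incr j \<omega> + (if j \<in> V_YX p n q \<beta> then ln (real p) else - ln (kernel_prob j \<omega>))"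

lemma kernel_prob_pos_ln:
  assumes w: "\<omega> \<in> set_pmf (XU_pmf p n q)" and j: "j < 2^n"
  shows "0 < kernel_prob j \<omega> \<and>
    ln (kernel_prob j \<omega>) = (if j \<in> H_Y p n q \<beta> then log_cyl_incr j \<omega> else log_cyl_u_incr j \<omega>)"
  using free_kernel_eq_ratio[OF p q w j, of \<beta>]
    cyl_prob_pos[OF p q w, of j] cyl_prob_pos[OF p q w, of "Suc j"]
    cyl_prob_u_pos[OF p q w, of j] cyl_prob_u_pos[OF p q w, of "Suc j"]
  by (simp add: kernel_prob_def log_cyl_incr_def log_cyl_u_incr_def ln_div)

lemma pmf_encoder_pmf_pos_ln:
  assumes w: "\<omega> \<in> set_pmf (XU_pmf p n q)"
  shows "0 < pmf (encoder_pmf p n q \<beta>) \<omega> \<and>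
    ln (pmf (encoder_pmf p n q \<beta>) \<omega>) = ln (cyl_prob p n q 0 \<omega>)
      + (\<Sum>j\<in>{..<2^n} - V_YX p n q \<beta>. ln (kernel_prob j \<omega>)) - real (card (V_YX p n q \<beta>)) * ln (real p)"
proof -
  let ?I = "{..<2^n} - V_YX p n q \<beta>"
  obtain x u where xu: "\<omega> = (x, u)" by (cases \<omega>)
  have u: "u \<in> words p (2^n)" using set_pmf_XU[OF p q w] xu by simp
  then have lu: "length u = 2^n" and uV: "\<forall>j\<in>V_YX p n q \<beta>. u ! j < p"
    using V_YX_subset[of p n q \<beta>] words_nth_less[OF u] by (auto simp: words_def)
  define P where "P = (\<Prod>j\<in>?I. kernel_prob j \<omega>)"
  have M: "pmf (encoder_pmf p n q \<beta>) \<omega> = cyl_prob p n q 0 \<omega> * P / real p ^ card (V_YX p n q \<beta>)"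
    using pmf_encoder_pmf[OF p lu uV] unfolding xu P_def by (simp add: kernel_prob_def cyl_prob_0[OF p q])
  have kpos: "0 < kernel_prob j \<omega>" if "j \<in> ?I" for j
    using kernel_prob_pos_ln[OF w] that by auto
  have Ppos: "0 < P" unfolding P_def by (rule prod_pos) (use kpos in auto)
  have G0pos: "0 < cyl_prob p n q 0 \<omega>" by (rule cyl_prob_pos[OF p q w])
  have lnP: "ln P = (\<Sum>j\<in>?I. ln (kernel_prob j \<omega>))"
    unfolding P_def by (rule ln_prod) (use kpos in force)+
  show ?thesis
    unfolding M using G0pos Ppos p by (simp add: ln_div ln_mult lnP ln_realpow)
qed

text \<open>Both laws factor along the indices; \<open>Q\<close> telescopes through the cylinder probabilities.\<close>
lemma ln_pmf_XU_div_encoder_pmf: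
  assumes w: "\<omega> \<in> set_pmf (XU_pmf p n q)"
  shows "ln (pmf (XU_pmf p n q) \<omega> / pmf (encoder_pmf p n q \<beta>) \<omega>) = (\<Sum>j<2^n. KL_term j \<omega>)"
proof -
  let ?V = "V_YX p n q \<beta>"
  have tel: "ln (pmf (XU_pmf p n q) \<omega>) = ln (cyl_prob p n q 0 \<omega>) + (\<Sum>j<2^n. log_cyl_incr j \<omega>)"
    using sum_lessThan_telescope[of "\<lambda>j. ln (cyl_prob p n q j \<omega>)" "2^n"] cyl_prob_full[OF p q w]
    by (simp add: log_cyl_incr_def)
  have "(\<Sum>j<2^n. if j \<in> ?V then ln (real p) else - ln (kernel_prob j \<omega>)) =
      (\<Sum>j\<in>{..<2^n} \<inter> {j. j \<in> ?V}. ln (real p)) + (\<Sum>j\<in>{..<2^n} \<inter> - {j. j \<in> ?V}. - ln (kernel_prob j \<omega>))"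
    by (rule sum.If_cases) simp
  also have "{..<2^n} \<inter> {j. j \<in> ?V} = ?V" using V_YX_subset by blast
  also have "{..<2^n} \<inter> - {j. j \<in> ?V} = {..<2^n} - ?V" by blast
  finally have "(\<Sum>j<2^n. KL_term j \<omega>) = (\<Sum>j<2^n. log_cyl_incr j \<omega>) + real (card ?V) * ln (real p)
       - (\<Sum>j\<in>{..<2^n} - ?V. ln (kernel_prob j \<omega>))"
    by (simp add: KL_term_def sum.distrib sum_negf)
  then show ?thesis using pmf_encoder_pmf_pos_ln[OF w] tel pmf_positive[OF w]
    by (simp add: ln_div)
qed

lemma sum_log_cyl_incr_eq_cond_entropy:
  assumes j: "j < 2^n"
  shows "(\<Sum>\<omega>\<in>set_pmf (XU_pmf p n q). pmf (XU_pmf p n q) \<omega> * log_cyl_incr j \<omega>) =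
    - ln 2 * cond_entropy (JUX p n q j)"
proof -
  have "cond_entropy (JUX p n q j) =
      - (\<Sum>\<omega>\<in>set_pmf (XU_pmf p n q). pmf (XU_pmf p n q) \<omega> * log 2 (cyl_prob p n q (Suc j) \<omega> / cyl_prob p n q j \<omega>))"
    unfolding JUX_def by (rule cond_entropy_map_pmf[OF finite_set_pmf_XU[OF p q]])
      (simp add: j case_prod_beta pmf_JUX[OF p q, unfolded JUX_def] pmf_map_snd_JUX[unfolded JUX_def])
  moreover have "log 2 (cyl_prob p n q (Suc j) \<omega> / cyl_prob p n q j \<omega>) = log_cyl_incr j \<omega> / ln 2"
    if "\<omega> \<in> set_pmf (XU_pmf p n q)" for \<omega>
    using cyl_prob_pos[OF p q that, of j] cyl_prob_pos[OF p q that, of "Suc j"]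
    by (simp add: log_def ln_div log_cyl_incr_def)
  ultimately show ?thesis by (simp add: sum_divide_distrib[symmetric] field_simps)
qed

lemma sum_log_cyl_u_incr_eq_cond_entropy:
  assumes j: "j < 2^n"
  shows "(\<Sum>\<omega>\<in>set_pmf (XU_pmf p n q). pmf (XU_pmf p n q) \<omega> * log_cyl_u_incr j \<omega>) =
    - ln 2 * cond_entropy (JU p n q j)"
proof -
  have "cond_entropy (JU p n q j) =
      - (\<Sum>\<omega>\<in>set_pmf (XU_pmf p n q). pmf (XU_pmf p n q) \<omega> * log 2 (cyl_prob_u p n q (Suc j) \<omega> / cyl_prob_u p n q j \<omega>))"
    unfolding JU_def by (rule cond_entropy_map_pmf[OF finite_set_pmf_XU[OF p q]])
      (simp add: j case_prod_beta pmf_JU[OF p q, unfolded JU_def] pmf_map_snd_JU[unfolded JU_def])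
  moreover have "log 2 (cyl_prob_u p n q (Suc j) \<omega> / cyl_prob_u p n q j \<omega>) = log_cyl_u_incr j \<omega> / ln 2"
    if "\<omega> \<in> set_pmf (XU_pmf p n q)" for \<omega>
    using cyl_prob_u_pos[OF p q that, of j] cyl_prob_u_pos[OF p q that, of "Suc j"]
    by (simp add: log_def ln_div log_cyl_u_incr_def)
  ultimately show ?thesis by (simp add: sum_divide_distrib[symmetric] field_simps)
qed

text \<open>Each index costs at most \<open>\<delta>\<^sub>N\<close> bits: on \<open>\<V>\<^sub>Y\<^sub>|\<^sub>X\<close> the conditional entropy is almost \<open>log p\<close>, on
  \<open>\<H>\<^sub>Y \<setminus> \<V>\<^sub>Y\<^sub>|\<^sub>X\<close> the kernels agree, and off \<open>\<H>\<^sub>Y\<close> the entropy of \<open>U\<^sup>j\<close> given its past is almost \<open>0\<close>.\<close>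
lemma sum_KL_term_le_of_V:
  assumes j: "j < 2^n" and V: "j \<in> V_YX p n q \<beta>"
  shows "(\<Sum>\<omega>\<in>set_pmf (XU_pmf p n q). pmf (XU_pmf p n q) \<omega> * KL_term j \<omega>) \<le> ln 2 * delta (2^n) \<beta>"
proof -
  let ?Q = "XU_pmf p n q"
  have "(\<Sum>\<omega>\<in>set_pmf (XU_pmf p n q). pmf (XU_pmf p n q) \<omega> * KL_term j \<omega>) = (\<Sum>\<omega>\<in>set_pmf ?Q. pmf ?Q \<omega> * log_cyl_incr j \<omega>) + (\<Sum>\<omega>\<in>set_pmf ?Q. pmf ?Q \<omega>) * ln (real p)"
    unfolding KL_term_def using V by (simp add: distrib_left sum.distrib sum_distrib_right)
  also have "\<dots> = ln (real p) - ln 2 * cond_entropy (JUX p n q j)"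
    by (simp add: sum_log_cyl_incr_eq_cond_entropy[OF j] sum_pmf_eq_1[OF finite_set_pmf_XU[OF p q]])
  also have "\<dots> \<le> ln 2 * delta (2^n) \<beta>"
  proof -
    have "log 2 (real p) - delta (2^n) \<beta> < cond_entropy (JUX p n q j)"
      using V by (simp add: V_YX_def)
    then have "ln 2 * (log 2 (real p) - delta (2^n) \<beta>) < ln 2 * cond_entropy (JUX p n q j)"
      by (rule mult_strict_left_mono) simp
    moreover have "ln 2 * log 2 (real p) = ln (real p)" using p by (simp add: log_def)
    ultimately show ?thesis by (simp add: right_diff_distrib)
  qed
  finally show ?thesis .
qed

lemma sum_KL_term_eq_0_of_H:
  assumes j: "j < 2^n" and "j \<notin> V_YX p n q \<beta>" "j \<in> H_Y p n q \<beta>"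
  shows "(\<Sum>\<omega>\<in>set_pmf (XU_pmf p n q). pmf (XU_pmf p n q) \<omega> * KL_term j \<omega>) = 0"
proof (intro sum.neutral ballI)
  fix \<omega> assume "\<omega> \<in> set_pmf (XU_pmf p n q)"
  then show "pmf (XU_pmf p n q) \<omega> * KL_term j \<omega> = 0"
    using assms kernel_prob_pos_ln[OF _ j] by (simp add: KL_term_def)
qed

lemma sum_KL_term_le_of_not_H:
  assumes j: "j < 2^n" and nV: "j \<notin> V_YX p n q \<beta>" and nH: "j \<notin> H_Y p n q \<beta>"
  shows "(\<Sum>\<omega>\<in>set_pmf (XU_pmf p n q). pmf (XU_pmf p n q) \<omega> * KL_term j \<omega>) \<le> ln 2 * delta (2^n) \<beta>"
proof -
  let ?Q = "XU_pmf p n q"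
  let ?E = "\<lambda>f. \<Sum>\<omega>\<in>set_pmf ?Q. pmf ?Q \<omega> * f \<omega>"
  have "?E (KL_term j) = (\<Sum>\<omega>\<in>set_pmf ?Q. pmf ?Q \<omega> * log_cyl_incr j \<omega> - pmf ?Q \<omega> * log_cyl_u_incr j \<omega>)"
  proof (rule sum.cong[OF refl])
    fix \<omega> assume "\<omega> \<in> set_pmf ?Q"
    then have "KL_term j \<omega> = log_cyl_incr j \<omega> - log_cyl_u_incr j \<omega>"
      using nV nH kernel_prob_pos_ln[OF _ j] by (simp add: KL_term_def)
    then show "pmf ?Q \<omega> * KL_term j \<omega> = pmf ?Q \<omega> * log_cyl_incr j \<omega> - pmf ?Q \<omega> * log_cyl_u_incr j \<omega>"
      by (simp add: right_diff_distrib)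
  qed
  also have "\<dots> = ?E (log_cyl_incr j) - ?E (log_cyl_u_incr j)"
    by (rule sum_subtractf)
  also have "?E (log_cyl_incr j) \<le> 0"
  proof (rule sum_nonpos)
    fix \<omega> assume w: "\<omega> \<in> set_pmf ?Q"
    have "log_cyl_incr j \<omega> \<le> 0"
      using cyl_prob_Suc_le[of p n q j \<omega>] cyl_prob_pos[OF p q w, of "Suc j"] by (simp add: log_cyl_incr_def)
    then show "pmf ?Q \<omega> * log_cyl_incr j \<omega> \<le> 0" by (simp add: mult_nonneg_nonpos)
  qed
  also have "0 - ?E (log_cyl_u_incr j) \<le> ln 2 * delta (2^n) \<beta>"
    using nH j by (simp add: sum_log_cyl_u_incr_eq_cond_entropy H_Y_def)
  finally show ?thesis by simp
qed

lemma sum_KL_term_le: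
  assumes j: "j < 2^n"
  shows "(\<Sum>\<omega>\<in>set_pmf (XU_pmf p n q). pmf (XU_pmf p n q) \<omega> * KL_term j \<omega>) \<le> ln 2 * delta (2^n) \<beta>"
  using sum_KL_term_le_of_V[OF j] sum_KL_term_eq_0_of_H[OF j] sum_KL_term_le_of_not_H[OF j]
  by (cases "j \<in> V_YX p n q \<beta>"; cases "j \<in> H_Y p n q \<beta>") (auto simp: delta_def)

lemma KL_div_XU_encoder_pmf_le: "KL_div (XU_pmf p n q) (encoder_pmf p n q \<beta>) \<le> 2^n * (ln 2 * delta (2^n) \<beta>)"
proof -
  let ?Q = "XU_pmf p n q"
  have "KL_div ?Q (encoder_pmf p n q \<beta>) = (\<Sum>\<omega>\<in>set_pmf ?Q. \<Sum>j<2^n. pmf ?Q \<omega> * KL_term j \<omega>)"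
    unfolding KL_div_def by (intro sum.cong refl) (simp add: ln_pmf_XU_div_encoder_pmf sum_distrib_left)
  also have "\<dots> = (\<Sum>j<2^n. \<Sum>\<omega>\<in>set_pmf ?Q. pmf ?Q \<omega> * KL_term j \<omega>)"
    by (rule sum.swap)
  also have "\<dots> \<le> (\<Sum>j<(2::nat)^n. ln 2 * delta (2^n) \<beta>)"
    by (rule sum_mono) (simp add: sum_KL_term_le)
  finally show ?thesis by simp
qed

lemma set_pmf_JUX_subset: "j < 2^n \<Longrightarrow> set_pmf (JUX p n q j) \<subseteq> {..<p} \<times> UNIV"
  unfolding JUX_def using set_pmf_XU[OF p q] words_nth_less by (fastforce simp: case_prod_beta)

lemma set_pmf_JU_subset: "j < 2^n \<Longrightarrow> set_pmf (JU p n q j) \<subseteq> {..<p} \<times> UNIV"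
  unfolding JU_def using set_pmf_XU[OF p q] words_nth_less by (fastforce simp: case_prod_beta)

lemma set_pmf_encoder_kernel_subset:
  assumes c: "c \<in> common_rand p n q \<beta>" and j: "j < 2^n"
  shows "set_pmf (encoder_kernel p n q \<beta> c x pre j) \<subseteq> {..<p}"
  using c set_pmf_condl_subset[OF p set_pmf_JUX_subset[OF j]] set_pmf_condl_subset[OF p set_pmf_JU_subset[OF j]]
  by (auto simp: encoder_kernel_def common_rand_def PiE_iff)

lemma set_pmf_encode:
  assumes c: "c \<in> common_rand p n q \<beta>" and u: "u \<in> set_pmf (encode p n q \<beta> c x (2^n))"
  shows "u \<in> words p (2^n)"
proof -
  have ne: "pmf (encode p n q \<beta> c x (2^n)) u \<noteq> 0" using u by (simp add: set_pmf_iff)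
  then have lu: "length u = 2^n" by (simp add: pmf_encode split: if_splits)
  have "u ! j < p" if "j < 2^n" for j
  proof -
    have "pmf (encoder_kernel p n q \<beta> c x (take j u) j) (u ! j) \<noteq> 0"
      using ne that lu by (simp add: pmf_encode)
    then have "u ! j \<in> set_pmf (encoder_kernel p n q \<beta> c x (take j u) j)" by (simp add: set_pmf_iff)
    then show ?thesis using set_pmf_encoder_kernel_subset[OF c that] by auto
  qed
  then show ?thesis using lu by (auto simp: words_def in_set_conv_nth)
qed

lemma length_block:
  assumes c: "c \<in> common_rand p n q \<beta>" and b: "b \<in> set_pmf (block p n q \<beta> c)"
  shows "length (fst b) = 2^n \<and> length (snd b) = 2^n"
  using b polar_inv_in_words[OF p set_pmf_encode[OF c]]
  by (auto simp: block_def words_def set_replicate_pmf)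

lemma bind_common_rand_block:
  "bind_pmf (pmf_of_set (common_rand p n q \<beta>)) (block p n q \<beta>) =
   map_pmf (\<lambda>(x, u). (x, polar_inv p n u)) (encoder_pmf p n q \<beta>)"
  unfolding encoder_pmf_def block_def map_pmf_def by (simp add: bind_assoc_pmf bind_return_pmf)

lemma map_pmf_XU_polar_inv:
  "map_pmf (\<lambda>(x, u). (x, polar_inv p n u)) (XU_pmf p n q) =
   map_pmf (\<lambda>xy. (map fst xy, map snd xy)) (replicate_pmf (2^n) q)"
  unfolding XU_pmf_def map_pmf_comp
proof (rule map_pmf_cong[OF refl])
  fix xy assume "xy \<in> set_pmf (replicate_pmf (2^n) q)"
  then have "map snd xy \<in> words p (2^n)" using q by (auto simp: words_def set_replicate_pmf)
  then show "(case (map fst xy, polar p n (map snd xy)) of (x, u) \<Rightarrow> (x, polar_inv p n u)) = (map fst xy, map snd xy)"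
    by (simp add: polar_inv_polar)
qed

lemma prob_block_tv_hist_gt_le:
  assumes e: "0 < \<epsilon>"
  shows "measure_pmf.prob (bind_pmf (pmf_of_set (common_rand p n q \<beta>)) (block p n q \<beta>))
      {b. tv p q (hist (fst b) (snd b)) > \<epsilon>}
    \<le> sqrt (2 * ln 2) * sqrt (2^n * delta (2^n) \<beta>)
      + 2 * real CARD('x) * real p * exp (- (2^n * \<epsilon>\<^sup>2) / (2 * (real CARD('x))\<^sup>2 * (real p)\<^sup>2))"
proof -
  let ?g = "\<lambda>(x, u). (x, polar_inv p n u)"
  let ?A = "{b. tv p q (hist (fst b) (snd b)) > \<epsilon>}"
  let ?Q = "XU_pmf p n q"
  have "measure_pmf.prob (bind_pmf (pmf_of_set (common_rand p n q \<beta>)) (block p n q \<beta>)) ?A =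
        measure_pmf.prob (encoder_pmf p n q \<beta>) (?g -` ?A)"
    by (simp add: bind_common_rand_block)
  also have "\<dots> \<le> measure_pmf.prob ?Q (?g -` ?A) + sqrt (KL_div ?Q (encoder_pmf p n q \<beta>))"
    by (rule measure_le_measure_add_sqrt_KL_div[OF finite_set_pmf_XU[OF p q]])
       (use pmf_encoder_pmf_pos_ln in blast)
  also have "measure_pmf.prob ?Q (?g -` ?A) = measure_pmf.prob (map_pmf ?g ?Q) ?A" by simp
  also have "\<dots> = measure_pmf.prob (replicate_pmf (2^n) q) {xy. tv p q (hist (map fst xy) (map snd xy)) > \<epsilon>}"
    by (simp add: map_pmf_XU_polar_inv vimage_def)
  also have "\<dots> \<le> 2 * real CARD('x) * real p * exp (- (2^n * \<epsilon>\<^sup>2) / (2 * (real CARD('x))\<^sup>2 * (real p)\<^sup>2))"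
    using prob_tv_hist_replicate_pmf_gt_le[OF p e, of "2^n" q] by simp
  also have "sqrt (KL_div ?Q (encoder_pmf p n q \<beta>)) \<le> sqrt (2 * ln 2) * sqrt (2^n * delta (2^n) \<beta>)"
  proof -
    have "KL_div ?Q (encoder_pmf p n q \<beta>) \<le> 2^n * (ln 2 * delta (2^n) \<beta>)"
      by (rule KL_div_XU_encoder_pmf_le)
    also have "\<dots> \<le> (2 * ln 2) * (2^n * delta (2^n) \<beta>)"
      by (simp add: delta_def)
    finally show ?thesis by (simp add: real_sqrt_mult[symmetric])
  qed
  finally show ?thesis by simp
qed

lemma length_scheme:
  assumes bs: "bs \<in> set_pmf (scheme p n q \<beta> k)"
  shows "length bs = k \<and> (\<forall>b\<in>set bs. length (fst b) = 2^n \<and> length (snd b) = 2^n)"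
proof -
  obtain c where "c \<in> set_pmf (pmf_of_set (common_rand p n q \<beta>))"
    and "bs \<in> set_pmf (replicate_pmf k (block p n q \<beta> c))"
    using bs by (auto simp: scheme_eq)
  moreover from this(1) have c: "c \<in> common_rand p n q \<beta>"
    using set_pmf_of_set[OF common_rand_nonempty[OF p, of n q \<beta>] finite_common_rand] by blast
  ultimately show ?thesis using length_block[OF c] by (auto simp: set_replicate_pmf)
qed

text \<open>All blocks share the common randomness, but each block on its own has the averaged law.\<close>
lemma prob_scheme_tv_hist_gt_le:
  assumes k: "0 < k"
  shows "measure_pmf.prob (scheme p n q \<beta> k) {bs. tv p q (hist (concat (map fst bs)) (concat (map snd bs))) > \<epsilon>}
    \<le> real k * measure_pmf.prob (bind_pmf (pmf_of_set (common_rand p n q \<beta>)) (block p n q \<beta>))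
        {b. tv p q (hist (fst b) (snd b)) > \<epsilon>}"
proof -
  let ?S = "scheme p n q \<beta> k"
  let ?Mb = "bind_pmf (pmf_of_set (common_rand p n q \<beta>)) (block p n q \<beta>)"
  let ?A = "{b. tv p q (hist (fst b) (snd b)) > \<epsilon>}"
  let ?E = "{bs. tv p q (hist (concat (map fst bs)) (concat (map snd bs))) > \<epsilon>}"
  have sub: "?E \<inter> set_pmf ?S \<subseteq> (\<Union>i\<in>{..<k}. (\<lambda>bs. bs ! i) -` ?A)"
    using k length_scheme by (fastforce dest: tv_hist_concat_gt_imp_block)
  have block_law: "measure_pmf.prob ?S ((\<lambda>bs. bs ! i) -` ?A) = measure_pmf.prob ?Mb ?A" if "i < k" for i
    using map_pmf_nth_scheme[OF that] by (metis measure_map_pmf)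
  have "measure_pmf.prob ?S ?E = measure_pmf.prob ?S (?E \<inter> set_pmf ?S)"
    by (simp add: measure_Int_set_pmf)
  also have "\<dots> \<le> measure_pmf.prob ?S (\<Union>i\<in>{..<k}. (\<lambda>bs. bs ! i) -` ?A)"
    by (rule measure_pmf.finite_measure_mono[OF sub]) simp
  also have "\<dots> \<le> (\<Sum>i<k. measure_pmf.prob ?S ((\<lambda>bs. bs ! i) -` ?A))"
    by (rule measure_pmf.finite_measure_subadditive_finite) auto
  also have "\<dots> = (\<Sum>i<k. measure_pmf.prob ?Mb ?A)"
    by (rule sum.cong[OF refl], rule block_law) simp
  finally show ?thesis by simp
qed

end

subsection \<open>Asymptotics of the bound\<close>

text \<open>Since \<open>N\<^sup>\<beta> \<le> \<surd>N\<close> for \<open>\<beta> \<le> 1/2\<close>, the Hoeffding term \<open>exp (- a N)\<close> decays faster than \<open>\<surd>(N \<delta>\<^sub>N)\<close>.\<close>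
lemma exp_le_sqrt_delta:
  fixes a \<beta> N :: real
  assumes a: "0 < a" and \<beta>: "0 < \<beta>" "\<beta> \<le> 1/2" and N: "1 \<le> N" and K: "ln 2 / (2 * a) \<le> sqrt N"
  shows "exp (- (N * a)) \<le> sqrt (N * 2 powr (- (N powr \<beta>)))"
proof -
  have "N powr \<beta> \<le> sqrt N"
    using powr_mono[OF \<beta>(2) N] powr_half_sqrt[of N] N by simp
  then have "2 powr (- sqrt N) \<le> 2 powr (- (N powr \<beta>))"
    by (intro powr_mono) auto
  moreover have "1 * 2 powr (- (N powr \<beta>)) \<le> N * 2 powr (- (N powr \<beta>))"
    by (rule mult_right_mono) (use N in auto)
  ultimately have C: "sqrt (2 powr (- sqrt N)) \<le> sqrt (N * 2 powr (- (N powr \<beta>)))"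
    by (intro real_sqrt_le_mono) linarith
  have "ln 2 / 2 \<le> sqrt N * a" using K a by (simp add: field_simps)
  then have "sqrt N * (ln 2 / 2) \<le> sqrt N * (sqrt N * a)" by (rule mult_left_mono) (use N in simp)
  also have "sqrt N * (sqrt N * a) = N * a" using N by (simp add: mult.assoc[symmetric])
  finally have "exp (- (N * a)) \<le> exp ((- sqrt N / 2) * ln 2)" by simp
  also have "\<dots> = sqrt (2 powr (- sqrt N))"
    using powr_half_sqrt_powr[of 2 "- sqrt N"] by (simp add: powr_def)
  finally show ?thesis using C by linarith
qed

lemma eventually_le_sqrt_two_pow: "eventually (\<lambda>m::nat. K \<le> sqrt (2^m)) at_top"
  using eventually_ge_at_top[of "nat \<lceil>K\<^sup>2\<rceil>"]
proof (rule eventually_mono)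
  fix m :: nat assume "nat \<lceil>K\<^sup>2\<rceil> \<le> m"
  then have "K\<^sup>2 \<le> real m" by linarith
  also have "real m \<le> 2^m"
    using less_exp[of m] by (metis less_imp_le of_nat_le_iff of_nat_numeral of_nat_power)
  finally have "K\<^sup>2 \<le> 2^m" .
  then show "K \<le> sqrt (2^m)" using real_sqrt_le_mono by fastforce
qed

lemma bound_rhs_bigo:
  fixes cx p k :: nat and \<beta> \<epsilon> :: real
  assumes cx: "1 \<le> cx" and p: "0 < p" and \<beta>: "0 < \<beta>" "\<beta> < 1/2" and e: "0 < \<epsilon>"
  shows "(\<lambda>m. bound_rhs cx p m \<beta> k \<epsilon>) \<in> O(\<lambda>m. real k * sqrt (2^m * delta (2^m) \<beta>))"
proof -
  define a where "a = \<epsilon>\<^sup>2 / (2 * (real cx)\<^sup>2 * (real p)\<^sup>2)"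
  have a: "0 < a" unfolding a_def using cx p e by simp
  define K where "K = ln 2 / (2 * a)"
  define f where "f = (\<lambda>m::nat. sqrt (2^m * delta (2^m) \<beta>))"
  have "eventually (\<lambda>m. norm (bound_rhs cx p m \<beta> k \<epsilon>) \<le>
      (sqrt (2 * ln 2) + 2 * real cx * real p) * norm (real k * f m)) at_top"
    using eventually_le_sqrt_two_pow[of K]
  proof (rule eventually_mono)
    fix m :: nat assume Km: "K \<le> sqrt (2^m)"
    have "exp (- (2^m * \<epsilon>\<^sup>2) / (2 * (real cx)\<^sup>2 * (real p)\<^sup>2)) = exp (- (2^m * a))"
      unfolding a_def by (simp add: field_simps)
    also have "\<dots> \<le> sqrt (2^m * 2 powr (- ((2^m) powr \<beta>)))"
      by (rule exp_le_sqrt_delta[OF a \<beta>(1)]) (use \<beta> Km K_def in auto)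
    also have "\<dots> = f m" unfolding f_def delta_def by simp
    finally have ex: "exp (- (2^m * \<epsilon>\<^sup>2) / (2 * (real cx)\<^sup>2 * (real p)\<^sup>2)) \<le> f m" .
    have "bound_rhs cx p m \<beta> k \<epsilon> = real k * (sqrt (2 * ln 2) * f m
        + 2 * real cx * real p * exp (- (2^m * \<epsilon>\<^sup>2) / (2 * (real cx)\<^sup>2 * (real p)\<^sup>2)))"
      unfolding bound_rhs_def f_def by simp
    also have "\<dots> \<le> real k * (sqrt (2 * ln 2) * f m + 2 * real cx * real p * f m)"
      by (intro mult_left_mono add_left_mono ex) simp_all
    finally have "bound_rhs cx p m \<beta> k \<epsilon> \<le> real k * (sqrt (2 * ln 2) * f m + 2 * real cx * real p * f m)" .
    moreover have "0 \<le> bound_rhs cx p m \<beta> k \<epsilon>" "0 \<le> f m"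
      unfolding bound_rhs_def f_def delta_def by simp_all
    ultimately show "norm (bound_rhs cx p m \<beta> k \<epsilon>) \<le> (sqrt (2 * ln 2) + 2 * real cx * real p) * norm (real k * f m)"
      by (simp add: algebra_simps)
  qed
  then show ?thesis unfolding f_def by (rule bigoI)
qed

theorem lemma8:
  fixes q :: "('x::finite \<times> nat) pmf" and p n k :: nat and \<beta> \<epsilon> :: real
  assumes "prime p"
    and "set_pmf q \<subseteq> UNIV \<times> {..<p}"
    and "0 < \<beta>" and "\<beta> < 1/2"
    and "k \<ge> 1"
    and "\<epsilon> > 0"
  shows "(measure_pmf.prob (scheme p n q \<beta> k)
           {bs. tv p q (hist (concat (map fst bs)) (concat (map snd bs))) > \<epsilon>}
         \<le> bound_rhs CARD('x) p n \<beta> k \<epsilon>)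
         \<and> (\<lambda>m. bound_rhs CARD('x) p m \<beta> k \<epsilon>)
           \<in> O(\<lambda>m. real k * sqrt (2^m * delta (2^m) \<beta>))"
proof
  have p: "0 < p" using assms(1) by (simp add: prime_gt_0_nat)
  show "(\<lambda>m. bound_rhs CARD('x) p m \<beta> k \<epsilon>) \<in> O(\<lambda>m. real k * sqrt (2^m * delta (2^m) \<beta>))"
    using p assms(3,4,6) by (intro bound_rhs_bigo) simp_all
  have "measure_pmf.prob (scheme p n q \<beta> k) {bs. tv p q (hist (concat (map fst bs)) (concat (map snd bs))) > \<epsilon>}
    \<le> real k * measure_pmf.prob (bind_pmf (pmf_of_set (common_rand p n q \<beta>)) (block p n q \<beta>))
        {b. tv p q (hist (fst b) (snd b)) > \<epsilon>}"
    using assms(5) by (intro prob_scheme_tv_hist_gt_le[OF p assms(2)]) simp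
  also have "\<dots> \<le> bound_rhs CARD('x) p n \<beta> k \<epsilon>"
    unfolding bound_rhs_def
    by (intro mult_left_mono prob_block_tv_hist_gt_le[OF p assms(2,6)]) simp
  finally show "measure_pmf.prob (scheme p n q \<beta> k)
      {bs. tv p q (hist (concat (map fst bs)) (concat (map snd bs))) > \<epsilon>} \<le> bound_rhs CARD('x) p n \<beta> k \<epsilon>" .
qed

end
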